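(* Let $q\ge 2$ and $1-\frac1{2q}<\alpha,\beta<1$. For every $(t,s)\in[0,1]^2$, the kernels $h_{N,M}(t,s)$ converge in $(\mathcal H^{\alpha,\beta})^{\otimes q}$ as $N,M\to\infty$ to a limit $\mu^{(q)}_{t,s}$, and the Hermite sheet $Z_{t,s}:=I_q(\mu^{(q)}_{t,s})$ satisfies, for all $(t,s),(u,v)\in[0,1]^2$, $$E[Z_{t,s}Z_{u,v}]=R_{q(\alpha-1)+1}(t,u)\,R_{q(\beta-1)+1}(s,v),$$ i.e. $Z$ has the covariance of a fractional Brownian sheet with Hurst indices $(q(\alpha-1)+1,\,q(\beta-1)+1)$.
   Context: $W$ is a fractional Brownian sheet on $[0,1]^2$ with Hurst indices $(\alpha,\beta)$ (centered Gaussian with covariance $R_\alpha(s_1,s_2)R_\beta(t_1,t_2)$), where $R_H(x,y)=\frac12(x^{2H}+y^{2H}-|x-y|^{2H})$. $\mathcal H^{\alpha,\beta}$ is the closure of step functions on $[0,1]^2$ under $\langle \mathbf 1_{[0,s_1]\times[0,t_1]},\mathbf 1_{[0,s_2]\times[0,t_2]}\rangle=R_\alpha(s_1,s_2)R_\beta(t_1,t_2)$; $I_q$ is the $q$-th multiple Wiener–Itô integral w.r.t. $W$. With $\Delta i=[\frac iN,\frac{i+1}N]$, $\Delta j=[\frac jM,\frac{j+1}M]$, $\kappa_\gamma=\frac{\gamma^q(2\gamma-1)^q}{(\gamma q-q+1)(2\gamma q-2q+1)}$ and $\varphi=\sqrt{\frac{q!}{\kappa_\alpha\kappa_\beta}}N^{q-1}M^{q-1}$,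 define $h_{N,M}(t,s)=\frac{\varphi}{q!}\sum_{i=0}^{[(N-1)t]}\sum_{j=0}^{[(M-1)s]}\mathbf 1_{\Delta i\times\Delta j}^{\otimes q}$ ($[\cdot]$ the integer part). *)

theory Defs
  imports "HOL-Probability.Probability"
begin

definition R :: "real \<Rightarrow> real \<Rightarrow> real \<Rightarrow> real" where
  "R H x y = (x powr (2*H) + y powr (2*H) - \<bar>x - y\<bar> powr (2*H)) / 2"

text \<open>A rectangle (a,b,c,d) stands for [a,b] x [c,d] in [0,1]^2.\<close>
type_synonym rect = "real \<times> real \<times> real \<times> real"

definition valid_rect :: "rect \<Rightarrow> bool" where
  "valid_rect r = (case r of (a,b,c,d) \<Rightarrow> 0 \<le> a \<and> a \<le> b \<and> b \<le> 1 \<and> 0 \<le> c \<and> c \<le> d \<and> d \<le> 1)"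

text \<open>Inner product in H^{alpha,beta} of indicators of two rectangles, obtained by
  bilinearity from the defining relation on indicators of [0,s] x [0,t].\<close>
definition ipH :: "real \<Rightarrow> real \<Rightarrow> rect \<Rightarrow> rect \<Rightarrow> real" where
  "ipH \<alpha> \<beta> r r' = (case r of (a,b,c,d) \<Rightarrow> case r' of (a',b',c',d') \<Rightarrow>
      (R \<alpha> b b' - R \<alpha> b a' - R \<alpha> a b' + R \<alpha> a a') *
      (R \<beta> d d' - R \<beta> d c' - R \<beta> c d' + R \<beta> c c'))"

definition kappa :: "real \<Rightarrow> nat \<Rightarrow> real" where
  "kappa \<gamma> q = \<gamma>^q * (2*\<gamma> - 1)^q / ((\<gamma>*q - q + 1) * (2*\<gamma>*q - 2*q + 1))"

definition phi :: "nat \<Rightarrow> real \<Rightarrow> real \<Rightarrow> nat \<Rightarrow> nat \<Rightarrow> real" where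
  "phi q \<alpha> \<beta> N M = sqrt (fact q / (kappa \<alpha> q * kappa \<beta> q)) * real N ^ (q-1) * real M ^ (q-1)"

text \<open>The kernel h_{N,M}(t,s), an element of the tensor power; E xs denotes the
  elementary tensor of the indicators of the rectangles in the list xs.\<close>
definition hNM :: "(rect list \<Rightarrow> 'a::real_vector) \<Rightarrow> nat \<Rightarrow> real \<Rightarrow> real \<Rightarrow> nat \<Rightarrow> nat \<Rightarrow> real \<Rightarrow> real \<Rightarrow> 'a" where
  "hNM E q \<alpha> \<beta> N M t s = (phi q \<alpha> \<beta> N M / fact q) *\<^sub>R
     (\<Sum>i\<in>{0..nat \<lfloor>(real N - 1) * t\<rfloor>}. \<Sum>j\<in>{0..nat \<lfloor>(real M - 1) * s\<rfloor>}.
        E (replicate q (real i / N, real (i+1) / N, real j / M, real (j+1) / M)))"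

end

theory Submission
  imports Defs
begin

text \<open>
  Because the kernel is a sum of elementary tensors of indicators of grid cells, its
  Gram matrix factorises: \<open>q! \<langle>h\<^sub>N\<^sub>,\<^sub>M(t,s), h\<^sub>N\<^sub>'\<^sub>,\<^sub>M\<^sub>'(u,v)\<rangle>\<close> is the product of two
  one-dimensional Gram sums, each a normalised sum over pairs of grid cells of the \<open>q\<close>-th power
  of the covariance of fBm increments (\<open>gram_1d\<close>). On each cell pair this power is compared
  with an explicit model, the double integral of \<open>\<bar>x - y\<bar>^p\<close> with \<open>p = q(2\<gamma>-2) \<in> (-1,0)\<close>,
  a second difference of \<open>\<bar>\<cdot>\<bar>^(p+2)\<close>. The model telescopes over the grid to \<open>\<kappa>\<^sub>\<gamma> R\<^sub>H\<close> with
  \<open>H = q(\<gamma>-1) + 1\<close>, while the cell errors, estimated by the mean value theorem (separated cells)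
  or crudely (nearby cells), add up to \<open>O(max(1/N,1/N')^(p+1)) \<rightarrow> 0\<close>. Hence the Gram matrix
  converges as all four indices tend to infinity; in a Hilbert space this forces the kernels to
  form a Cauchy net, and the limits \<open>\<mu>\<^sub>t\<^sub>,\<^sub>s\<close> have the limiting Gram matrix, which the isometry
  of \<open>I\<^sub>q\<close> turns into the claimed covariance of the Hermite sheet.
\<close>

subsection \<open>Convergence in a Hilbert space from convergence of Gram matrices\<close>

text \<open>If the Gram matrix \<open>\<langle>x i, x j\<rangle>\<close> converges to a constant along \<open>F \<times> F\<close>, then \<open>x\<close> is a
  Cauchy net, since \<open>\<parallel>x i - x j\<parallel>\<^sup>2 = \<langle>x i, x i\<rangle> - 2\<langle>x i, x j\<rangle> + \<langle>x j, x j\<rangle>\<close>; by completeness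
  it converges.\<close>
lemma tendsto_of_gram_tendsto:
  fixes x :: "'i \<Rightarrow> 'a::{real_inner, complete_space}" and F :: "'i filter"
  assumes F: "F \<noteq> bot" and gram: "((\<lambda>(i, j). inner (x i) (x j)) \<longlongrightarrow> c) (F \<times>\<^sub>F F)"
  shows "\<exists>\<mu>. (x \<longlongrightarrow> \<mu>) F"
proof -
  have "cauchy_filter (filtermap x F)"
    unfolding cauchy_filter_metric_filtermap
  proof (intro allI impI)
    fix e :: real assume e: "e > 0"
    then have "e\<^sup>2 / 4 > 0" by simp
    then have "\<forall>\<^sub>F (i, j) in F \<times>\<^sub>F F. dist (inner (x i) (x j)) c < e\<^sup>2 / 4"
      using gram[unfolded tendsto_iff] by (simp only: case_prod_beta')
    then obtain P where P: "eventually P F" and close: "\<And>i j. P i \<Longrightarrow> P j \<Longrightarrow> \<bar>inner (x i) (x j) - c\<bar> < e\<^sup>2 / 4"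
      unfolding eventually_prod_same dist_real_def by auto
    have "dist (x i) (x j) < e" if "P i" "P j" for i j
    proof -
      have "(norm (x i - x j))\<^sup>2 = inner (x i) (x i) - 2 * inner (x i) (x j) + inner (x j) (x j)"
        unfolding power2_norm_eq_inner by (simp add: inner_diff algebra_simps inner_commute)
      also have "\<dots> < e\<^sup>2"
        using close[OF \<open>P i\<close> \<open>P i\<close>] close[OF \<open>P i\<close> \<open>P j\<close>] close[OF \<open>P j\<close> \<open>P j\<close>] by linarith
      finally show ?thesis using e by (simp add: dist_norm power_less_imp_less_base)
    qed
    with P show "\<exists>P. eventually P F \<and> (\<forall>i j. P i \<and> P j \<longrightarrow> dist (x i) (x j) < e)" by blast
  qed
  moreover have "filtermap x F \<noteq> bot" using F by (simp add: filtermap_bot_iff)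
  ultimately obtain \<mu> where "filtermap x F \<le> nhds \<mu>"
    using cauchy_filter_complete_converges[OF _ complete_UNIV] by auto
  then show ?thesis unfolding filterlim_def by blast
qed

lemma inner_of_limits:
  fixes x y :: "'i \<Rightarrow> 'a::real_inner" and F G :: "'i filter"
  assumes FG: "F \<noteq> bot" "G \<noteq> bot" and x: "(x \<longlongrightarrow> \<mu>) F" and y: "(y \<longlongrightarrow> \<nu>) G"
    and gram: "((\<lambda>(i, j). inner (x i) (y j)) \<longlongrightarrow> L) (F \<times>\<^sub>F G)"
  shows "inner \<mu> \<nu> = L"
proof -
  have "((\<lambda>ij. inner (x (fst ij)) (y (snd ij))) \<longlongrightarrow> inner \<mu> \<nu>) (F \<times>\<^sub>F G)"
    by (intro tendsto_inner filterlim_compose[OF x filterlim_fst] filterlim_compose[OF y filterlim_snd])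
  moreover have "F \<times>\<^sub>F G \<noteq> bot" using FG by (simp add: prod_filter_eq_bot)
  ultimately show ?thesis using gram by (intro tendsto_unique) (auto simp: case_prod_beta')
qed

subsection \<open>Elementary estimates for real powers\<close>

lemma powr_mvt:
  fixes x y e :: real
  assumes "0 < x" "x < y"
  shows "\<exists>z. x < z \<and> z < y \<and> y powr e - x powr e = (y - x) * (e * z powr (e - 1))"
  by (rule MVT2[OF assms(2)]) (use assms in \<open>auto intro!: has_real_derivative_powr\<close>)

definition apow :: "real \<Rightarrow> real \<Rightarrow> real" where
  "apow r z = \<bar>z\<bar> powr r"

definition apow_deriv :: "real \<Rightarrow> real \<Rightarrow> real" where
  "apow_deriv r z = r * sgn z * \<bar>z\<bar> powr (r - 1)"

lemma apow_has_derivative: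
  assumes r: "r > 1"
  shows "(apow r has_real_derivative apow_deriv r z) (at z)"
proof -
  consider "z > 0" | "z < 0" | "z = 0" by linarith
  then show ?thesis
  proof cases
    case 1
    have "eventually (\<lambda>x. apow r x = x powr r) (nhds z)"
      using eventually_nhds_in_open[of "{0<..}" z] 1
      by (auto simp: apow_def elim!: eventually_mono)
    then show ?thesis
      by (subst DERIV_cong_ev[OF refl _ refl])
         (use 1 in \<open>auto intro!: derivative_eq_intros simp: apow_deriv_def sgn_if\<close>)
  next
    case 2
    have "eventually (\<lambda>x. apow r x = (- x) powr r) (nhds z)"
      using eventually_nhds_in_open[of "{..<0}" z] 2
      by (auto simp: apow_def elim!: eventually_mono)
    then show ?thesis
      by (subst DERIV_cong_ev[OF refl _ refl])
         (use 2 in \<open>auto intro!: derivative_eq_intros simp: apow_deriv_def sgn_if\<close>)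
  next
    case 3
    text \<open>At the origin the difference quotient is bounded by \<open>\<bar>h\<bar>^(r-1) \<rightarrow> 0\<close>.\<close>
    have lim: "((\<lambda>h. \<bar>h\<bar> powr (r - 1)) \<longlongrightarrow> 0) (at (0::real))"
      using tendsto_powr'[of abs 0 "at (0::real)" "\<lambda>_. r - 1" "r - 1"] r
      by (auto intro!: tendsto_eq_intros)
    have "((\<lambda>h. (apow r (0 + h) - apow r 0) / h) \<longlongrightarrow> 0) (at (0::real))"
    proof (rule Lim_null_comparison[OF _ lim])
      show "\<forall>\<^sub>F h in at 0. norm ((apow r (0 + h) - apow r 0) / h) \<le> \<bar>h\<bar> powr (r - 1)"
        by (rule eventually_at_filter[THEN iffD2], intro always_eventually allI impI)
           (simp add: apow_def powr_diff abs_divide)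
    qed
    then show ?thesis using 3 by (simp add: DERIV_def apow_deriv_def)
  qed
qed

lemma powr_diff_le_holder:
  fixes u v s :: real
  assumes "0 < v" "v \<le> u" "0 < s" "s \<le> 1"
  shows "u powr s - v powr s \<le> 2 * (u - v) powr s"
proof -
  consider "v = u" | "v \<le> u - v" | "u - v < v" "v < u" using assms by linarith
  then show ?thesis
  proof cases
    case 2
    have "u powr s - v powr s \<le> u powr s" by simp
    also have "\<dots> \<le> (2 * (u - v)) powr s"
      using 2 assms by (intro powr_mono2) auto
    also have "\<dots> = 2 powr s * (u - v) powr s"
      using 2 assms by (intro powr_mult; simp)
    also have "\<dots> \<le> 2 * (u - v) powr s"
      using powr_mono[of s 1 2] assms by (intro mult_right_mono) auto
    finally show ?thesis .
  next
    case 3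
    obtain z where z: "v < z" "u powr s - v powr s = (u - v) * (s * z powr (s - 1))"
      using powr_mvt[OF assms(1) 3(2)] by blast
    have "z powr (s - 1) \<le> (u - v) powr (s - 1)"
      using z 3 assms by (intro powr_mono2') auto
    then have "u powr s - v powr s \<le> (u - v) * (s * (u - v) powr (s - 1))"
      unfolding z(2) using assms 3 by (intro mult_left_mono) auto
    also have "\<dots> = s * (u - v) powr s"
      using 3 by (simp add: powr_diff field_simps)
    also have "\<dots> \<le> 2 * (u - v) powr s"
      using assms by (intro mult_right_mono) auto
    finally show ?thesis .
  qed simp
qed

text \<open>Hoelder continuity of the signed power \<open>x \<mapsto> sgn x \<bar>x\<bar>^s\<close>, i.e. of the derivative
  of \<open>\<bar>x\<bar>^(s+1)\<close>, on the whole line.\<close>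
lemma signed_powr_holder:
  fixes x y s :: real
  assumes "0 < s" "s \<le> 1"
  shows "\<bar>sgn x * \<bar>x\<bar> powr s - sgn y * \<bar>y\<bar> powr s\<bar> \<le> 2 * \<bar>x - y\<bar> powr s"
proof (cases "x * y \<le> 0")
  case True
  then have "\<bar>x\<bar> \<le> \<bar>x - y\<bar>" "\<bar>y\<bar> \<le> \<bar>x - y\<bar>" by (auto simp: mult_le_0_iff)
  then have "\<bar>x\<bar> powr s + \<bar>y\<bar> powr s \<le> \<bar>x - y\<bar> powr s + \<bar>x - y\<bar> powr s"
    using assms by (intro add_mono powr_mono2) auto
  moreover have "\<bar>sgn x * \<bar>x\<bar> powr s - sgn y * \<bar>y\<bar> powr s\<bar> \<le> \<bar>x\<bar> powr s + \<bar>y\<bar> powr s"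
    by (auto simp: sgn_if abs_if)
  ultimately show ?thesis by simp
next
  case False
  then have same: "(x > 0 \<and> y > 0) \<or> (x < 0 \<and> y < 0)"
    by (metis mult_nonneg_nonpos mult_nonpos_nonneg not_le order_less_imp_le)
  have "\<bar>\<bar>x\<bar> powr s - \<bar>y\<bar> powr s\<bar> \<le> 2 * \<bar>\<bar>x\<bar> - \<bar>y\<bar>\<bar> powr s"
    using same assms powr_diff_le_holder[of "\<bar>x\<bar>" "\<bar>y\<bar>" s] powr_diff_le_holder[of "\<bar>y\<bar>" "\<bar>x\<bar>" s]
      powr_mono2[of s "\<bar>x\<bar>" "\<bar>y\<bar>"] powr_mono2[of s "\<bar>y\<bar>" "\<bar>x\<bar>"]
    by (cases "\<bar>y\<bar> \<le> \<bar>x\<bar>") auto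
  moreover have "\<bar>\<bar>x\<bar> - \<bar>y\<bar>\<bar> = \<bar>x - y\<bar>" using same by auto
  moreover have "\<bar>sgn x * \<bar>x\<bar> powr s - sgn y * \<bar>y\<bar> powr s\<bar> = \<bar>\<bar>x\<bar> powr s - \<bar>y\<bar> powr s\<bar>"
    using same by (auto simp: sgn_if abs_minus_commute)
  ultimately show ?thesis by simp
qed

lemma powr_lipschitz_unit:
  fixes x y r :: real
  assumes "0 \<le> x" "x \<le> 1" "0 \<le> y" "y \<le> 1" "1 \<le> r"
  shows "\<bar>x powr r - y powr r\<bar> \<le> r * \<bar>x - y\<bar>"
proof -
  have ordered: "b powr r - a powr r \<le> r * (b - a)" if ab: "0 \<le> a" "a < b" "b \<le> 1" for a b
  proof (cases "a = 0")
    case True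
    have "b powr r \<le> b powr 1" using ab assms powr_mono'[of 1 r b] by simp
    also have "\<dots> \<le> r * b" using ab assms mult_right_mono[of 1 r b] by simp
    finally show ?thesis using True assms by simp
  next
    case False
    obtain z where z: "a < z" "z < b" "b powr r - a powr r = (b - a) * (r * z powr (r - 1))"
      using powr_mvt[of a b r] ab False by auto
    have "z powr (r - 1) \<le> 1 powr (r - 1)" using z ab assms by (intro powr_mono2) auto
    then show ?thesis unfolding z(3) using ab assms by (simp add: mult.commute mult_left_mono)
  qed
  consider "x = y" | "y < x" | "x < y" by linarith
  then show ?thesis
  proof cases
    case 2
    then show ?thesis using ordered[of y x] powr_mono2[of r y x] assms by simp
  next
    case 3
    then show ?thesis using ordered[of x y] powr_mono2[of r x y] assms by simp
  qed simp
qed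

text \<open>The fBm covariance \<open>R_H\<close> with \<open>H \<ge> 1/2\<close> is Lipschitz on the unit square; this controls
  the error made by replacing \<open>t\<close> by the grid point \<open>([(N-1)t]+1)/N\<close>.\<close>
lemma R_lipschitz:
  fixes H X Y t u :: real
  assumes H: "1 \<le> 2 * H" and X: "0 \<le> X" "X \<le> 1" and Y: "0 \<le> Y" "Y \<le> 1"
    and t: "0 \<le> t" "t \<le> 1" and u: "0 \<le> u" "u \<le> 1"
  shows "\<bar>R H X Y - R H t u\<bar> \<le> 2 * H * (\<bar>X - t\<bar> + \<bar>Y - u\<bar>)"
proof -
  have a: "\<bar>X powr (2*H) - t powr (2*H)\<bar> \<le> 2 * H * \<bar>X - t\<bar>"
    and b: "\<bar>Y powr (2*H) - u powr (2*H)\<bar> \<le> 2 * H * \<bar>Y - u\<bar>"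
    and c: "\<bar>\<bar>X - Y\<bar> powr (2*H) - \<bar>t - u\<bar> powr (2*H)\<bar> \<le> 2 * H * \<bar>\<bar>X - Y\<bar> - \<bar>t - u\<bar>\<bar>"
    using assms by (intro powr_lipschitz_unit; linarith)+
  have "2 * H * \<bar>\<bar>X - Y\<bar> - \<bar>t - u\<bar>\<bar> \<le> 2 * H * (\<bar>X - t\<bar> + \<bar>Y - u\<bar>)"
    using H by (intro mult_left_mono) auto
  with a b c show ?thesis
    unfolding R_def by (simp add: abs_le_iff field_simps)
qed

subsection \<open>Rectangular second differences of \<open>\<bar>z\<bar>^r\<close>\<close>

text \<open>For
  \<open>f = \<bar>\<cdot>\<bar>^(2H)\<close> it is, up to the factor \<open>-1/2\<close>, the covariance of the increments of an fBm
  over two intervals.\<close>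
definition rect_diff :: "(real \<Rightarrow> real) \<Rightarrow> real \<Rightarrow> real \<Rightarrow> real \<Rightarrow> real \<Rightarrow> real" where
  "rect_diff f a b a' b' = f (b - b') - f (b - a') - f (a - b') + f (a - a')"

lemma rect_diff_apow_swap: "rect_diff (apow r) a b a' b' = rect_diff (apow r) a' b' a b"
  unfolding rect_diff_def apow_def by (simp add: abs_minus_commute)

lemma rect_diff_telescope:
  fixes f :: "real \<Rightarrow> real" and x y :: "nat \<Rightarrow> real"
  shows "(\<Sum>i\<in>{0..I}. \<Sum>i'\<in>{0..I'}. rect_diff f (x i) (x (Suc i)) (y i') (y (Suc i')))
       = rect_diff f (x 0) (x (Suc I)) (y 0) (y (Suc I'))"
proof -
  define G where "G u = f (u - y (Suc I')) - f (u - y 0)" for u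
  have inner: "(\<Sum>i'\<in>{0..I'}. rect_diff f a b (y i') (y (Suc i'))) = G b - G a" for a b
  proof -
    have "(\<Sum>i'\<in>{0..I'}. rect_diff f a b (y i') (y (Suc i')))
        = (\<Sum>i'\<in>{0..I'}. (\<lambda>k. f (b - y k) - f (a - y k)) (Suc i') - (\<lambda>k. f (b - y k) - f (a - y k)) i')"
      unfolding rect_diff_def by (intro sum.cong) (auto simp: algebra_simps)
    also have "\<dots> = G b - G a" by (subst sum_Suc_diff) (auto simp: G_def algebra_simps)
    finally show ?thesis .
  qed
  have "(\<Sum>i\<in>{0..I}. \<Sum>i'\<in>{0..I'}. rect_diff f (x i) (x (Suc i)) (y i') (y (Suc i')))
      = (\<Sum>i\<in>{0..I}. (G \<circ> x) (Suc i) - (G \<circ> x) i)"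
    by (simp add: inner)
  also have "\<dots> = G (x (Suc I)) - G (x 0)" by (subst sum_Suc_diff) auto
  also have "\<dots> = rect_diff f (x 0) (x (Suc I)) (y 0) (y (Suc I'))"
    unfolding G_def rect_diff_def by (simp add: algebra_simps)
  finally show ?thesis .
qed

lemma rect_diff_apow_mvt:
  fixes r a b a' b' :: real
  assumes r: "r > 1" and ab': "a' < b'"
  shows "\<exists>\<tau>. 0 < \<tau> \<and> \<tau> < b' - a' \<and>
     rect_diff (apow r) a b a' b'
       = (b' - a') * (apow_deriv r (a - b' + \<tau>) - apow_deriv r (b - b' + \<tau>))"
proof -
  define g where "g \<tau> = apow r (a - b' + \<tau>) - apow r (b - b' + \<tau>)" for \<tau>
  have shift: "((\<lambda>\<tau>. apow r (c + \<tau>)) has_real_derivative apow_deriv r (c + \<tau>)) (at \<tau>)" for c \<tau>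
    using DERIV_shift[of "apow r" "apow_deriv r (\<tau> + c)" \<tau> c] apow_has_derivative[OF r, of "\<tau> + c"]
    by (simp add: add.commute)
  have "(g has_real_derivative (apow_deriv r (a - b' + \<tau>) - apow_deriv r (b - b' + \<tau>))) (at \<tau>)" for \<tau>
    unfolding g_def by (intro DERIV_diff shift)
  then obtain \<tau> where "0 < \<tau>" "\<tau> < b' - a'"
     "g (b' - a') - g 0 = (b' - a' - 0) * (apow_deriv r (a - b' + \<tau>) - apow_deriv r (b - b' + \<tau>))"
    using MVT2[of 0 "b' - a'" g "\<lambda>\<tau>. apow_deriv r (a - b' + \<tau>) - apow_deriv r (b - b' + \<tau>)"] ab'
    by auto
  moreover have "g (b' - a') - g 0 = rect_diff (apow r) a b a' b'"
    unfolding g_def rect_diff_def by (simp add: algebra_simps)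
  ultimately show ?thesis by auto
qed

lemma rect_diff_apow_near:
  fixes r a b a' b' :: real
  assumes r: "1 < r" "r \<le> 2" and ab: "a < b" and ab': "a' < b'"
  shows "\<bar>rect_diff (apow r) a b a' b'\<bar>
           \<le> 2 * r * ((b - a) * (b' - a')) * (max (b - a) (b' - a')) powr (r - 2)"
proof -
  have ordered: "\<bar>rect_diff (apow r) a b a' b'\<bar> \<le> 2 * r * ((b - a) * (b' - a')) * (b - a) powr (r - 2)"
    if ab: "a < b" and ab': "a' < b'" for a b a' b' :: real
  proof -
    obtain \<tau> where \<tau>: "0 < \<tau>" "\<tau> < b' - a'"
      "rect_diff (apow r) a b a' b' = (b' - a') * (apow_deriv r (a - b' + \<tau>) - apow_deriv r (b - b' + \<tau>))"
      using rect_diff_apow_mvt[OF r(1) ab'] by blast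
    have "\<bar>apow_deriv r (a - b' + \<tau>) - apow_deriv r (b - b' + \<tau>)\<bar>
        = r * \<bar>sgn (a - b' + \<tau>) * \<bar>a - b' + \<tau>\<bar> powr (r - 1) - sgn (b - b' + \<tau>) * \<bar>b - b' + \<tau>\<bar> powr (r - 1)\<bar>"
      unfolding apow_deriv_def using r by (simp add: abs_mult right_diff_distrib[symmetric] mult.assoc)
    also have "\<dots> \<le> r * (2 * \<bar>(a - b' + \<tau>) - (b - b' + \<tau>)\<bar> powr (r - 1))"
      using r by (intro mult_left_mono signed_powr_holder) auto
    also have "\<dots> = 2 * r * (b - a) powr (1 + (r - 2))"
      using ab by simp
    also have "\<dots> = 2 * r * ((b - a) * (b - a) powr (r - 2))"
      using ab powr_add[of "b - a" 1 "r - 2"] by simp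
    finally have deriv_diff: "\<bar>apow_deriv r (a - b' + \<tau>) - apow_deriv r (b - b' + \<tau>)\<bar>
        \<le> 2 * r * ((b - a) * (b - a) powr (r - 2))" .
    have "\<bar>rect_diff (apow r) a b a' b'\<bar>
        = (b' - a') * \<bar>apow_deriv r (a - b' + \<tau>) - apow_deriv r (b - b' + \<tau>)\<bar>"
      unfolding \<tau>(3) using ab' by (simp add: abs_mult)
    also have "\<dots> \<le> (b' - a') * (2 * r * ((b - a) * (b - a) powr (r - 2)))"
      using deriv_diff ab' by (intro mult_left_mono) auto
    finally show ?thesis by (simp add: algebra_simps)
  qed
  show ?thesis
  proof (cases "b' - a' \<le> b - a")
    case True
    then show ?thesis using ordered[OF ab ab'] by (simp add: max_def)
  next
    case False
    then show ?thesis using ordered[OF ab' ab] rect_diff_apow_swap[of r a b a' b']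
      by (simp add: max_def mult.commute)
  qed
qed

lemma rect_diff_apow_far:
  fixes r a b a' b' :: real
  assumes r: "r > 1" and ab: "a < b" and gap: "b < a'" and ab': "a' < b'"
  shows "\<exists>z. a' - b < z \<and> z < b' - a \<and>
     - rect_diff (apow r) a b a' b' = r * (r - 1) * ((b - a) * (b' - a')) * z powr (r - 2)"
proof -
  obtain \<tau> where \<tau>: "0 < \<tau>" "\<tau> < b' - a'"
    "rect_diff (apow r) a b a' b' = (b' - a') * (apow_deriv r (a - b' + \<tau>) - apow_deriv r (b - b' + \<tau>))"
    using rect_diff_apow_mvt[OF r ab'] by blast
  define X where "X = b' - b - \<tau>"
  define Y where "Y = b' - a - \<tau>"
  have X: "0 < X" "a' - b < X" and Y: "X < Y" "Y - X = b - a" "Y < b' - a"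
    using \<tau> gap ab unfolding X_def Y_def by auto
  obtain z where z: "X < z" "z < Y" "Y powr (r - 1) - X powr (r - 1) = (Y - X) * ((r - 1) * z powr (r - 2))"
    using powr_mvt[OF X(1) Y(1), of "r - 1"] by (auto simp: diff_diff_add)
  have "apow_deriv r (b - b' + \<tau>) = - r * X powr (r - 1)" "apow_deriv r (a - b' + \<tau>) = - r * Y powr (r - 1)"
    unfolding apow_deriv_def X_def Y_def using X Y by (auto simp: X_def Y_def sgn_if)
  then have "- rect_diff (apow r) a b a' b' = (b' - a') * r * (Y powr (r - 1) - X powr (r - 1))"
    unfolding \<tau>(3) by (simp add: algebra_simps)
  also have "\<dots> = r * (r - 1) * ((b - a) * (b' - a')) * z powr (r - 2)"
    unfolding z(3) Y(2) by (simp add: algebra_simps)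
  finally show ?thesis using z X Y by (intro exI[of _ z]) auto
qed

subsection \<open>One grid cell: the increment covariance versus its power-law model\<close>

definition cell_cov :: "real \<Rightarrow> real \<Rightarrow> real \<Rightarrow> real \<Rightarrow> real \<Rightarrow> real" where
  "cell_cov \<gamma> a b a' b' = R \<gamma> b b' - R \<gamma> b a' - R \<gamma> a b' + R \<gamma> a a'"

text \<open>For \<open>p > -1\<close> this is \<open>\<integral>\<^sub>a\<^sup>b \<integral>\<^sub>a'\<^sup>b' \<bar>x - y\<bar>^p dy dx\<close>, computed by integrating twice.
  With \<open>p = q(2\<gamma> - 2)\<close> it is the exact model of the \<open>q\<close>-th power of the cell covariance;
  unlike that power, it telescopes over a grid.\<close>
definition cell_model :: "real \<Rightarrow> real \<Rightarrow> real \<Rightarrow> real \<Rightarrow> real \<Rightarrow> real" where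
  "cell_model p a b a' b' = - rect_diff (apow (p + 2)) a b a' b' / ((p + 1) * (p + 2))"

text \<open>The covariance density constant: \<open>cell_cov \<gamma> = \<gamma>(2\<gamma>-1) \<integral>\<integral> \<bar>x - y\<bar>^(2\<gamma>-2)\<close>.\<close>
definition dens_const :: "real \<Rightarrow> real" where
  "dens_const \<gamma> = \<gamma> * (2 * \<gamma> - 1)"

text \<open>The error of the model on a cell, after the normalisation \<open>(\<ell>\<ell>')^(1-q)\<close> by the cell
  area that appears in the kernel \<open>h\<^sub>N\<^sub>,\<^sub>M\<close>.\<close>
definition cell_error :: "nat \<Rightarrow> real \<Rightarrow> real \<Rightarrow> real \<Rightarrow> real \<Rightarrow> real \<Rightarrow> real" where
  "cell_error q \<gamma> a b a' b' = (1 / ((b - a) * (b' - a'))) ^ (q - 1) * cell_cov \<gamma> a b a' b' ^ q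
      - dens_const \<gamma> ^ q * cell_model (q * (2 * \<gamma> - 2)) a b a' b'"

lemma cell_cov_rect_diff: "cell_cov \<gamma> a b a' b' = - rect_diff (apow (2 * \<gamma>)) a b a' b' / 2"
  unfolding cell_cov_def rect_diff_def R_def apow_def by (simp add: abs_minus_commute field_simps)

lemma cell_error_swap: "cell_error q \<gamma> a b a' b' = cell_error q \<gamma> a' b' a b"
  unfolding cell_error_def cell_cov_rect_diff cell_model_def rect_diff_apow_swap[of _ a b a' b']
  by (simp add: mult.commute)

lemma dens_const_pos: "1/2 < \<gamma> \<Longrightarrow> dens_const \<gamma> > 0"
  unfolding dens_const_def by simp

lemma power_normalise:
  fixes H x :: real and q :: nat
  assumes "H > 0" "q \<ge> 1"
  shows "(1 / H) ^ (q - 1) * (H ^ q * x) = H * x"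
proof -
  have "H ^ q = H ^ (q - 1) * H" using assms by (simp add: power_eq_if)
  then show ?thesis using assms by (simp add: power_one_over field_simps)
qed

lemma cell_model_telescope:
  fixes x y :: "nat \<Rightarrow> real"
  shows "(\<Sum>i\<in>{0..I}. \<Sum>i'\<in>{0..I'}. cell_model p (x i) (x (Suc i)) (y i') (y (Suc i')))
       = cell_model p (x 0) (x (Suc I)) (y 0) (y (Suc I'))"
proof -
  have "(\<Sum>i\<in>{0..I}. \<Sum>i'\<in>{0..I'}. cell_model p (x i) (x (Suc i)) (y i') (y (Suc i')))
      = - (\<Sum>i\<in>{0..I}. \<Sum>i'\<in>{0..I'}. rect_diff (apow (p + 2)) (x i) (x (Suc i)) (y i') (y (Suc i')))
        / ((p + 1) * (p + 2))"
    unfolding cell_model_def by (simp add: sum_divide_distrib sum_negf)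
  then show ?thesis unfolding rect_diff_telescope cell_model_def .
qed

lemma cell_model_origin:
  fixes X Y p :: real
  assumes "X \<ge> 0" "Y \<ge> 0"
  shows "cell_model p 0 X 0 Y = 2 * R (p / 2 + 1) X Y / ((p + 1) * (p + 2))"
proof -
  define S where "S = X powr (p + 2) + Y powr (p + 2) - \<bar>X - Y\<bar> powr (p + 2)"
  have "cell_model p 0 X 0 Y = S / ((p + 1) * (p + 2))"
    unfolding cell_model_def rect_diff_def apow_def S_def using assms by (simp add: abs_minus_commute)
  moreover have "2 * (p / 2 + 1) = p + 2" by simp
  then have "R (p / 2 + 1) X Y = S / 2" unfolding R_def S_def by simp
  ultimately show ?thesis by simp
qed

lemma powr_neg_oscillation:
  fixes p d s z1 z2 :: real
  assumes p: "p < 0" and d: "d > 0" and s: "s > 0"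
    and z1: "d < z1" "z1 < d + s" and z2: "d < z2" "z2 < d + s"
  shows "\<bar>z1 powr p - z2 powr p\<bar> \<le> s * (- p) * d powr (p - 1)"
proof -
  have "z1 powr p \<le> d powr p" "z2 powr p \<le> d powr p"
    "(d + s) powr p \<le> z1 powr p" "(d + s) powr p \<le> z2 powr p"
    using z1 z2 d p by (auto intro!: powr_mono2')
  then have "\<bar>z1 powr p - z2 powr p\<bar> \<le> d powr p - (d + s) powr p" by linarith
  also have "\<dots> \<le> s * (- p) * d powr (p - 1)"
  proof -
    obtain \<xi> where \<xi>: "d < \<xi>" "(d + s) powr p - d powr p = (d + s - d) * (p * \<xi> powr (p - 1))"
      using powr_mvt[of d "d + s" p] d s by auto
    have "\<xi> powr (p - 1) \<le> d powr (p - 1)" using \<xi> d p by (intro powr_mono2') auto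
    then show ?thesis using \<xi>(2) s p by (simp add: algebra_simps)
  qed
  finally show ?thesis .
qed

text \<open>Error on well separated cells: both the covariance and the model are, by the mean value
  theorem, the area times a power of the distance, evaluated at two nearby points.\<close>
lemma cell_error_far:
  fixes q :: nat and \<gamma> a b a' b' :: real
  assumes q: "q \<ge> 1" and \<gamma>: "1/2 < \<gamma>" and p: "-1 < q * (2 * \<gamma> - 2)" "q * (2 * \<gamma> - 2) < 0"
    and ab: "a < b" and gap: "b < a'" and ab': "a' < b'"
  shows "\<bar>cell_error q \<gamma> a b a' b'\<bar> \<le> dens_const \<gamma> ^ q * ((b - a) * (b' - a'))
            * ((b - a) + (b' - a')) * (- (q * (2 * \<gamma> - 2))) * (a' - b) powr (q * (2 * \<gamma> - 2) - 1)"
proof -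
  define p where "p = q * (2 * \<gamma> - 2)"
  define H where "H = (b - a) * (b' - a')"
  define c where "c = dens_const \<gamma>"
  have H: "H > 0" using ab ab' unfolding H_def by simp
  have c: "c > 0" using \<gamma> dens_const_pos unfolding c_def by blast
  obtain z1 where z1: "a' - b < z1" "z1 < b' - a"
    "- rect_diff (apow (2*\<gamma>)) a b a' b' = (2*\<gamma>) * (2*\<gamma> - 1) * H * z1 powr (2*\<gamma> - 2)"
    using rect_diff_apow_far[of "2*\<gamma>" a b a' b'] \<gamma> ab gap ab' unfolding H_def by auto
  have p_range: "-1 < p" "p < 0" using p unfolding p_def by auto
  obtain z2 where z2: "a' - b < z2" "z2 < b' - a"
    "- rect_diff (apow (p+2)) a b a' b' = (p+2) * (p + 2 - 1) * H * z2 powr (p + 2 - 2)"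
    using rect_diff_apow_far[of "p+2" a b a' b'] p_range ab gap ab' unfolding H_def by auto
  have "cell_cov \<gamma> a b a' b' = c * H * z1 powr (2 * \<gamma> - 2)"
    unfolding cell_cov_rect_diff c_def dens_const_def using z1(3) by (simp add: field_simps)
  then have "cell_cov \<gamma> a b a' b' ^ q = H ^ q * (c ^ q * z1 powr p)"
    unfolding p_def using z1 gap by (simp add: power_mult_distrib powr_power)
  moreover have "cell_model p a b a' b' = H * z2 powr p"
  proof -
    have "p + 2 - 2 = p" "p + 2 - 1 = p + 1" by simp_all
    moreover have "(p + 1) * (p + 2) \<noteq> 0" using p_range by simp
    ultimately show ?thesis unfolding cell_model_def using z2(3) by (simp add: field_simps)
  qed
  ultimately have err: "cell_error q \<gamma> a b a' b' = c ^ q * H * (z1 powr p - z2 powr p)"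
    unfolding cell_error_def H_def[symmetric] c_def[symmetric] p_def[symmetric]
    using power_normalise[OF H q, of "c ^ q * z1 powr p"] by (simp add: algebra_simps)
  have osc: "\<bar>z1 powr p - z2 powr p\<bar> \<le> ((b - a) + (b' - a')) * (- p) * (a' - b) powr (p - 1)"
    using z1 z2 ab gap ab' p_range by (intro powr_neg_oscillation) auto
  have "\<bar>cell_error q \<gamma> a b a' b'\<bar> = c ^ q * H * \<bar>z1 powr p - z2 powr p\<bar>"
    unfolding err using c H by (simp add: abs_mult)
  also have "\<dots> \<le> c ^ q * H * (((b - a) + (b' - a')) * (- p) * (a' - b) powr (p - 1))"
    using c H osc by (intro mult_left_mono) auto
  finally show ?thesis unfolding c_def H_def p_def by (simp add: algebra_simps)
qed

lemma cell_cov_near: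
  assumes \<gamma>: "1/2 < \<gamma>" "\<gamma> < 1" and ab: "a < b" and ab': "a' < b'"
  shows "\<bar>cell_cov \<gamma> a b a' b'\<bar> \<le> 2 * \<gamma> * ((b - a) * (b' - a')) * max (b - a) (b' - a') powr (2 * \<gamma> - 2)"
  using rect_diff_apow_near[of "2*\<gamma>" a b a' b'] assms unfolding cell_cov_rect_diff by simp

lemma cell_model_near:
  assumes p: "-1 < p" "p < 0" and ab: "a < b" and ab': "a' < b'"
  shows "\<bar>cell_model p a b a' b'\<bar> \<le> 2 * ((b - a) * (b' - a')) * max (b - a) (b' - a') powr p / (p + 1)"
proof -
  define H where "H = (b - a) * (b' - a')"
  define m where "m = max (b - a) (b' - a')"
  have "\<bar>rect_diff (apow (p + 2)) a b a' b'\<bar> \<le> 2 * H * m powr p * (p + 2)"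
    using rect_diff_apow_near[of "p+2" a b a' b'] p ab ab' unfolding H_def m_def by (simp add: algebra_simps)
  moreover have "(p + 1) * (p + 2) > 0" using p by simp
  ultimately have "\<bar>rect_diff (apow (p + 2)) a b a' b'\<bar> / ((p + 1) * (p + 2))
      \<le> 2 * H * m powr p * (p + 2) / ((p + 1) * (p + 2))"
    by (intro divide_right_mono) auto
  also have "\<dots> = 2 * H * m powr p / (p + 1)"
    using p by simp
  finally show ?thesis
    unfolding cell_model_def H_def m_def using \<open>(p + 1) * (p + 2) > 0\<close> by (simp add: abs_divide)
qed

lemma cell_error_near:
  fixes q :: nat and \<gamma> a b a' b' :: real
  assumes q: "q \<ge> 1" and \<gamma>: "1/2 < \<gamma>" "\<gamma> < 1" and p: "-1 < q * (2 * \<gamma> - 2)"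
    and ab: "a < b" and ab': "a' < b'"
  shows "\<bar>cell_error q \<gamma> a b a' b'\<bar> \<le> ((b - a) * (b' - a')) * max (b - a) (b' - a') powr (q * (2 * \<gamma> - 2))
            * ((2 * \<gamma>) ^ q + 2 * dens_const \<gamma> ^ q / (q * (2 * \<gamma> - 2) + 1))"
proof -
  define p where "p = q * (2 * \<gamma> - 2)"
  define H where "H = (b - a) * (b' - a')"
  define m where "m = max (b - a) (b' - a')"
  define c where "c = dens_const \<gamma>"
  have H: "H > 0" using ab ab' unfolding H_def by simp
  have c: "c > 0" using \<gamma> dens_const_pos unfolding c_def by blast
  have m: "m > 0" using ab unfolding m_def by auto
  have pneg: "p < 0" using q \<gamma> unfolding p_def by (simp add: mult_pos_neg)
  have "\<bar>cell_cov \<gamma> a b a' b'\<bar> ^ q \<le> (2 * \<gamma> * H * m powr (2 * \<gamma> - 2)) ^ q"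
    using cell_cov_near[OF \<gamma> ab ab'] unfolding H_def m_def by (intro power_mono) auto
  also have "\<dots> = H ^ q * ((2 * \<gamma>) ^ q * m powr p)"
    using m unfolding p_def by (simp add: power_mult_distrib powr_power)
  finally have "(1 / H) ^ (q - 1) * \<bar>cell_cov \<gamma> a b a' b'\<bar> ^ q
      \<le> (1 / H) ^ (q - 1) * (H ^ q * ((2 * \<gamma>) ^ q * m powr p))"
    using H by (intro mult_left_mono) auto
  then have cov: "\<bar>(1 / H) ^ (q - 1) * cell_cov \<gamma> a b a' b' ^ q\<bar> \<le> H * ((2 * \<gamma>) ^ q * m powr p)"
    using H unfolding power_normalise[OF H q] by (simp add: abs_mult power_abs)
  have model: "c ^ q * \<bar>cell_model p a b a' b'\<bar> \<le> c ^ q * (2 * H * m powr p / (p + 1))"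
    using cell_model_near[of p a b a' b'] p pneg ab ab' c
    unfolding p_def H_def m_def by (intro mult_left_mono) auto
  have "\<bar>cell_error q \<gamma> a b a' b'\<bar> \<le> \<bar>(1 / H) ^ (q - 1) * cell_cov \<gamma> a b a' b' ^ q\<bar> + c ^ q * \<bar>cell_model p a b a' b'\<bar>"
    unfolding cell_error_def H_def[symmetric] c_def[symmetric] p_def[symmetric]
    using c abs_triangle_ineq4[of "(1 / H) ^ (q - 1) * cell_cov \<gamma> a b a' b' ^ q" "c ^ q * cell_model p a b a' b'"]
    by (simp add: abs_mult)
  also have "\<dots> \<le> H * ((2 * \<gamma>) ^ q * m powr p) + c ^ q * (2 * H * m powr p / (p + 1))"
    using cov model by (rule add_mono)
  finally show ?thesis unfolding H_def[symmetric] m_def[symmetric] c_def[symmetric] p_def[symmetric]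
    by (simp add: field_simps)
qed

subsection \<open>Summing the cell errors over a grid\<close>

text \<open>Riemann-sum comparison for the decreasing function \<open>z^(p-1)\<close>, \<open>p < 0\<close>.\<close>
lemma powr_neg_sum_le:
  fixes hs d0 p :: real
  assumes hs: "hs > 0" and d0: "d0 > 0" and p: "p < 0"
  shows "(\<Sum>j<n. hs * (d0 + real (Suc j) * hs) powr (p - 1)) \<le> (d0 powr p - (d0 + real n * hs) powr p) / (- p)"
proof (induction n)
  case (Suc n)
  define x where "x = d0 + real n * hs"
  have x: "x > 0" using hs d0 unfolding x_def by (simp add: add_pos_nonneg)
  obtain \<xi> where \<xi>: "x < \<xi>" "\<xi> < x + hs" "(x + hs) powr p - x powr p = (x + hs - x) * (p * \<xi> powr (p - 1))"
    using powr_mvt[of x "x + hs" p] x hs by auto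
  have "(x + hs) powr (p - 1) \<le> \<xi> powr (p - 1)"
    using x p \<xi> by (intro powr_mono2') auto
  then have step: "hs * (x + hs) powr (p - 1) \<le> (x powr p - (x + hs) powr p) / (- p)"
    using \<xi>(3) hs p by (simp add: field_simps)
  have x_Suc: "d0 + real (Suc n) * hs = x + hs" unfolding x_def by (simp add: algebra_simps)
  have "(\<Sum>j<Suc n. hs * (d0 + real (Suc j) * hs) powr (p - 1))
      = (\<Sum>j<n. hs * (d0 + real (Suc j) * hs) powr (p - 1)) + hs * (x + hs) powr (p - 1)"
    using x_Suc by simp
  also have "\<dots> \<le> (d0 powr p - x powr p) / (- p) + (x powr p - (x + hs) powr p) / (- p)"
    using Suc.IH step unfolding x_def by (intro add_mono) auto
  also have "\<dots> = (d0 powr p - (d0 + real (Suc n) * hs) powr p) / (- p)"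
    unfolding x_Suc using p by (simp add: field_simps)
  finally show ?case .
qed simp

lemma powr_neg_progression_sum:
  fixes hs d0 m p :: real
  assumes hs: "hs > 0" "hs \<le> m" and m: "m > 0" and d0: "d0 \<ge> m" and p: "p < 0"
  shows "(\<Sum>j<n. hs * (d0 + real j * hs) powr (p - 1)) \<le> m powr p * (1 + 1 / (- p))"
proof (cases n)
  case 0
  then show ?thesis using p by simp
next
  case (Suc k)
  have d0p: "d0 > 0" using d0 m by simp
  have "(\<Sum>j<n. hs * (d0 + real j * hs) powr (p - 1))
      = hs * d0 powr (p - 1) + (\<Sum>j<k. hs * (d0 + real (Suc j) * hs) powr (p - 1))"
    unfolding Suc sum.lessThan_Suc_shift by simp
  also have "\<dots> \<le> m * m powr (p - 1) + (d0 powr p - (d0 + real k * hs) powr p) / (- p)"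
  proof (intro add_mono powr_neg_sum_le hs d0p p)
    have "d0 powr (p - 1) \<le> m powr (p - 1)" using d0 m p by (intro powr_mono2') auto
    then show "hs * d0 powr (p - 1) \<le> m * m powr (p - 1)"
      using hs by (intro mult_mono) auto
  qed
  also have "\<dots> \<le> m powr p + m powr p / (- p)"
  proof (intro add_mono divide_right_mono)
    show "m * m powr (p - 1) \<le> m powr p" using m by (simp add: powr_diff)
    have "d0 powr p \<le> m powr p" using d0 m p by (intro powr_mono2') auto
    moreover have "(d0 + real k * hs) powr p \<ge> 0" by simp
    ultimately show "d0 powr p - (d0 + real k * hs) powr p \<le> m powr p" by linarith
  qed (use p in simp)
  also have "\<dots> = m powr p * (1 + 1 / (- p))" by (simp add: field_simps)
  finally show ?thesis .
qed

lemma far_row_sum: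
  fixes hs m z0 p :: real
  assumes hs: "hs > 0" "hs \<le> m" and m: "m > 0" and p: "p < 0"
  shows "(\<Sum>k\<in>{0..K}. if m \<le> real k * hs - z0 then hs * (real k * hs - z0) powr (p - 1) else 0)
           \<le> m powr p * (1 + 1 / (- p))"
proof -
  define S where "S = {k\<in>{0..K}. m \<le> real k * hs - z0}"
  have sum_S: "(\<Sum>k\<in>{0..K}. if m \<le> real k * hs - z0 then hs * (real k * hs - z0) powr (p - 1) else 0)
      = (\<Sum>k\<in>S. hs * (real k * hs - z0) powr (p - 1))"
    unfolding S_def by (simp only: sum.inter_filter[OF finite_atLeastAtMost])
  show ?thesis
  proof (cases "S = {}")
    case True
    then show ?thesis unfolding sum_S using p m by simp
  next
    case False
    define k0 where "k0 = Min S"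
    define k1 where "k1 = Max S"
    have fin: "finite S" unfolding S_def by simp
    have k0: "k0 \<in> S" and k1: "k1 \<in> S" and sub: "S \<subseteq> {k0..k1}"
      using fin False unfolding k0_def k1_def by auto
    have "(\<Sum>k\<in>S. hs * (real k * hs - z0) powr (p - 1)) \<le> (\<Sum>k\<in>{k0..k1}. hs * (real k * hs - z0) powr (p - 1))"
      using sub hs by (intro sum_mono2) auto
    also have "\<dots> = (\<Sum>j\<in>{0..k1 - k0}. hs * (real (j + k0) * hs - z0) powr (p - 1))"
    proof -
      have "{k0..k1} = {0 + k0..(k1 - k0) + k0}" using sub k1 by auto
      then show ?thesis by (simp only: sum.shift_bounds_cl_nat_ivl)
    qed
    also have "\<dots> = (\<Sum>j<Suc (k1 - k0). hs * ((real k0 * hs - z0) + real j * hs) powr (p - 1))"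
      by (intro sum.cong) (auto simp: algebra_simps)
    also have "\<dots> \<le> m powr p * (1 + 1 / (- p))"
      using k0 unfolding S_def by (intro powr_neg_progression_sum hs m p) auto
    finally show ?thesis unfolding sum_S .
  qed
qed

lemma grid_count:
  fixes hs lo hi :: real
  assumes hs: "hs > 0" and lohi: "lo \<le> hi"
  shows "(\<Sum>k\<in>{0..K}. if lo < real k * hs \<and> real k * hs < hi then hs else 0) \<le> hi - lo + hs"
proof -
  define S where "S = {k\<in>{0..K}. lo < real k * hs \<and> real k * hs < hi}"
  have sum_S: "(\<Sum>k\<in>{0..K}. if lo < real k * hs \<and> real k * hs < hi then hs else 0) = hs * card S"
  proof -
    have "(\<Sum>k\<in>{0..K}. if lo < real k * hs \<and> real k * hs < hi then hs else 0) = (\<Sum>k\<in>S. hs)"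
      unfolding S_def by (simp only: sum.inter_filter[OF finite_atLeastAtMost])
    then show ?thesis by simp
  qed
  show ?thesis
  proof (cases "S = {}")
    case True
    then show ?thesis unfolding sum_S using lohi hs by simp
  next
    case False
    define k0 where "k0 = Min S"
    define k1 where "k1 = Max S"
    have fin: "finite S" unfolding S_def by simp
    have k0: "k0 \<in> S" and k1: "k1 \<in> S" and sub: "S \<subseteq> {k0..k1}"
      using fin False unfolding k0_def k1_def by auto
    have le: "k0 \<le> k1" using sub k1 by auto
    have "real (card S) \<le> real (k1 - k0) + 1"
      using card_mono[OF _ sub] le by simp
    then have "hs * card S \<le> hs * (real (k1 - k0) + 1)" using hs by (intro mult_left_mono) auto
    also have "\<dots> = real k1 * hs - real k0 * hs + hs" using le by (simp add: of_nat_diff algebra_simps)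
    also have "\<dots> \<le> hi - lo + hs" using k0 k1 unfolding S_def by simp
    finally show ?thesis unfolding sum_S .
  qed
qed

text \<open>Weights used to bound the error of the cell pair \<open>[ih,(i+1)h] \<times> [i'h',(i'+1)h']\<close>:
  \<open>far_weight\<close> is active when the second cell lies at distance \<open>\<ge> m\<close> to the right of the first,
  \<open>near_weight\<close> when the cells are closer than \<open>m\<close> (in either order).\<close>
definition far_weight :: "real \<Rightarrow> real \<Rightarrow> real \<Rightarrow> real \<Rightarrow> nat \<Rightarrow> nat \<Rightarrow> real" where
  "far_weight p h h' m i i' = (if m \<le> real i' * h' - real (Suc i) * h
      then h * h' * (real i' * h' - real (Suc i) * h) powr (p - 1) else 0)"

definition near_weight :: "real \<Rightarrow> real \<Rightarrow> real \<Rightarrow> nat \<Rightarrow> nat \<Rightarrow> real" where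
  "near_weight h h' m i i' = (if real i' * h' - real (Suc i) * h < m \<and> real i * h - real (Suc i') * h' < m
      then h * h' else 0)"

lemma far_weight_nonneg: "h > 0 \<Longrightarrow> h' > 0 \<Longrightarrow> far_weight p h h' m i i' \<ge> 0"
  unfolding far_weight_def by simp

lemma near_weight_nonneg: "h > 0 \<Longrightarrow> h' > 0 \<Longrightarrow> near_weight h h' m i i' \<ge> 0"
  unfolding near_weight_def by simp

lemma cell_error_weights:
  fixes q :: nat and \<gamma> h h' m :: real and i i' :: nat
  assumes q: "q \<ge> 1" and \<gamma>: "1/2 < \<gamma>" "\<gamma> < 1" and p: "-1 < q * (2 * \<gamma> - 2)"
    and h: "h > 0" "h' > 0" and m: "m = max h h'"
  shows "\<bar>cell_error q \<gamma> (real i * h) (real (Suc i) * h) (real i' * h') (real (Suc i') * h')\<bar>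
     \<le> 2 * m * (- (q * (2 * \<gamma> - 2))) * dens_const \<gamma> ^ q * far_weight (q * (2 * \<gamma> - 2)) h h' m i i'
      + 2 * m * (- (q * (2 * \<gamma> - 2))) * dens_const \<gamma> ^ q * far_weight (q * (2 * \<gamma> - 2)) h' h m i' i
      + ((2 * \<gamma>) ^ q + 2 * dens_const \<gamma> ^ q / (q * (2 * \<gamma> - 2) + 1)) * m powr (q * (2 * \<gamma> - 2))
          * near_weight h h' m i i'"
proof -
  define p where "p = q * (2 * \<gamma> - 2)"
  define c where "c = dens_const \<gamma>"
  define err where "err = cell_error q \<gamma> (real i * h) (real (Suc i) * h) (real i' * h') (real (Suc i') * h')"
  define F where "F = far_weight p h h' m i i'"
  define F' where "F' = far_weight p h' h m i' i"
  define C3 where "C3 = (2 * \<gamma>) ^ q + 2 * c ^ q / (p + 1)"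
  have pneg: "p < 0" using q \<gamma> unfolding p_def by (simp add: mult_pos_neg)
  have c: "c > 0" using \<gamma> dens_const_pos unfolding c_def by blast
  have C3: "C3 \<ge> 0" unfolding C3_def using c p \<gamma> unfolding p_def by (intro add_nonneg_nonneg divide_nonneg_pos) auto
  have mp: "m > 0" using h m by auto
  have lengths: "real (Suc i) * h - real i * h = h" "real (Suc i') * h' - real i' * h' = h'"
    by (simp_all add: algebra_simps)
  have lt: "real i * h < real (Suc i) * h" "real i' * h' < real (Suc i') * h'"
    using h by simp_all
  have far_factor: "0 \<le> 2 * m * (- p) * c ^ q" using mp pneg c by (intro mult_nonneg_nonneg) auto
  have widen: "c ^ q * (h * h') * (h + h') * (- p) * D powr (p - 1) \<le> 2 * m * (- p) * c ^ q * (h * h' * D powr (p - 1))"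
    for D
  proof -
    have "c ^ q * (h * h') * (h + h') * (- p) * D powr (p - 1) = (h + h') * ((- p) * c ^ q * (h * h' * D powr (p - 1)))"
      by (simp add: algebra_simps)
    also have "\<dots> \<le> (2 * m) * ((- p) * c ^ q * (h * h' * D powr (p - 1)))"
      using m h c pneg by (intro mult_right_mono mult_nonneg_nonneg) auto
    finally show ?thesis by (simp add: algebra_simps)
  qed
  text \<open>All three terms of the bound are nonnegative, so it suffices to bound \<open>\<bar>err\<bar>\<close> by one
    of them, according to the relative position of the two cells.\<close>
  have nonneg: "0 \<le> 2 * m * (- p) * c ^ q * F" "0 \<le> 2 * m * (- p) * c ^ q * F'"
    "0 \<le> C3 * m powr p * near_weight h h' m i i'"
    using mult_nonneg_nonneg[OF far_factor far_weight_nonneg[OF h]]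
      mult_nonneg_nonneg[OF far_factor far_weight_nonneg[OF h(2,1)]] C3 near_weight_nonneg[OF h]
    unfolding F_def F'_def by simp_all
  consider (right) "m \<le> real i' * h' - real (Suc i) * h" | (left) "m \<le> real i * h - real (Suc i') * h'"
    | (close) "real i' * h' - real (Suc i) * h < m" "real i * h - real (Suc i') * h' < m" by linarith
  then have "\<bar>err\<bar> \<le> 2 * m * (- p) * c ^ q * F + 2 * m * (- p) * c ^ q * F' + C3 * m powr p * near_weight h h' m i i'"
  proof cases
    case right
    then have "\<bar>err\<bar> \<le> c ^ q * (h * h') * (h + h') * (- p) * (real i' * h' - real (Suc i) * h) powr (p - 1)"
      using cell_error_far[OF q \<gamma>(1) p _ lt(1) _ lt(2)] mp pneg
      unfolding err_def lengths c_def p_def by simp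
    also have "\<dots> \<le> 2 * m * (- p) * c ^ q * F"
      using right widen unfolding F_def far_weight_def by simp
    finally show ?thesis using nonneg by linarith
  next
    case left
    then have "\<bar>err\<bar> \<le> c ^ q * (h' * h) * (h' + h) * (- p) * (real i * h - real (Suc i') * h') powr (p - 1)"
      using cell_error_far[OF q \<gamma>(1) p _ lt(2) _ lt(1)] mp pneg
      unfolding err_def cell_error_swap[of q \<gamma> "real i * h"] lengths c_def p_def by simp
    also have "\<dots> \<le> 2 * m * (- p) * c ^ q * F'"
      using left widen unfolding F'_def far_weight_def by (simp add: ac_simps)
    finally show ?thesis using nonneg by linarith
  next
    case close
    then have "\<bar>err\<bar> \<le> C3 * m powr p * near_weight h h' m i i'"
      using cell_error_near[OF q \<gamma> p lt] unfolding err_def lengths C3_def c_def p_def m near_weight_def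
      by (simp add: algebra_simps)
    then show ?thesis using nonneg by linarith
  qed
  then show ?thesis unfolding err_def F_def F'_def C3_def c_def p_def .
qed

lemma row_total_le:
  fixes h K :: real and I :: nat
  assumes "real (Suc I) * h \<le> 1" "K \<ge> 0"
  shows "(\<Sum>i\<in>{0..I}. h * K) \<le> K"
  using assms mult_right_mono[of "real (Suc I) * h" 1 K] by (simp add: mult.assoc)

text \<open>Summed over the grid, the far weights stay bounded by \<open>m^p (1 - 1/p)\<close> \<dots>\<close>
lemma far_weight_sum:
  fixes p h h' m :: real and I I' :: nat
  assumes h: "h > 0" "h' > 0" "h' \<le> m" and p: "p < 0" and I: "real (Suc I) * h \<le> 1"
  shows "(\<Sum>i\<in>{0..I}. \<Sum>i'\<in>{0..I'}. far_weight p h h' m i i') \<le> m powr p * (1 + 1 / (- p))"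
proof -
  have row: "(\<Sum>i'\<in>{0..I'}. far_weight p h h' m i i') \<le> h * (m powr p * (1 + 1 / (- p)))" for i
  proof -
    have "(\<Sum>i'\<in>{0..I'}. far_weight p h h' m i i')
        = h * (\<Sum>i'\<in>{0..I'}. if m \<le> real i' * h' - real (Suc i) * h
                 then h' * (real i' * h' - real (Suc i) * h) powr (p - 1) else 0)"
      unfolding far_weight_def sum_distrib_left by (intro sum.cong) auto
    also have "\<dots> \<le> h * (m powr p * (1 + 1 / (- p)))"
      using h p by (intro mult_left_mono far_row_sum) auto
    finally show ?thesis .
  qed
  have "(\<Sum>i\<in>{0..I}. \<Sum>i'\<in>{0..I'}. far_weight p h h' m i i') \<le> (\<Sum>i\<in>{0..I}. h * (m powr p * (1 + 1 / (- p))))"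
    by (intro sum_mono row)
  also have "\<dots> \<le> m powr p * (1 + 1 / (- p))"
    using I p by (intro row_total_le) auto
  finally show ?thesis .
qed

text \<open>\<dots> and the near weights by \<open>5m\<close>: each \<open>h\<close>-cell has only \<open>O(m/h')\<close> near neighbours.\<close>
lemma near_weight_sum:
  fixes h h' m :: real and I I' :: nat
  assumes h: "h > 0" "h' > 0" and m: "h \<le> m" "h' \<le> m" and I: "real (Suc I) * h \<le> 1"
  shows "(\<Sum>i\<in>{0..I}. \<Sum>i'\<in>{0..I'}. near_weight h h' m i i') \<le> 5 * m"
proof -
  have row: "(\<Sum>i'\<in>{0..I'}. near_weight h h' m i i') \<le> h * (5 * m)" for i
  proof -
    define lo where "lo = real i * h - h' - m"
    define hi where "hi = real (Suc i) * h + m"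
    have "(\<Sum>i'\<in>{0..I'}. near_weight h h' m i i')
        = h * (\<Sum>i'\<in>{0..I'}. if lo < real i' * h' \<and> real i' * h' < hi then h' else 0)"
      unfolding near_weight_def sum_distrib_left lo_def hi_def
      by (intro sum.cong) (auto simp: algebra_simps)
    also have "\<dots> \<le> h * (hi - lo + h')"
      using h m unfolding lo_def hi_def by (intro mult_left_mono grid_count) (auto simp: algebra_simps)
    also have "\<dots> \<le> h * (5 * m)"
      using h m unfolding lo_def hi_def by (intro mult_left_mono) (auto simp: algebra_simps)
    finally show ?thesis .
  qed
  have "(\<Sum>i\<in>{0..I}. \<Sum>i'\<in>{0..I'}. near_weight h h' m i i') \<le> (\<Sum>i\<in>{0..I}. h * (5 * m))"
    by (intro sum_mono row)
  also have "\<dots> \<le> 5 * m"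
    using I m h by (intro row_total_le) auto
  finally show ?thesis .
qed

lemma grid_error:
  fixes q :: nat and \<gamma> h h' :: real and I I' :: nat
  assumes q: "q \<ge> 1" and \<gamma>: "1/2 < \<gamma>" "\<gamma> < 1" and p: "-1 < q * (2 * \<gamma> - 2)"
    and h: "h > 0" "h' > 0"
    and I: "real (Suc I) * h \<le> 1" and I': "real (Suc I') * h' \<le> 1"
  shows "\<bar>\<Sum>i\<in>{0..I}. \<Sum>i'\<in>{0..I'}. cell_error q \<gamma> (real i * h) (real (Suc i) * h) (real i' * h') (real (Suc i') * h')\<bar>
     \<le> (4 * dens_const \<gamma> ^ q * (1 - q * (2 * \<gamma> - 2))
          + 5 * ((2 * \<gamma>) ^ q + 2 * dens_const \<gamma> ^ q / (q * (2 * \<gamma> - 2) + 1)))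
        * max h h' powr (q * (2 * \<gamma> - 2) + 1)"
proof -
  define p where "p = q * (2 * \<gamma> - 2)"
  define m where "m = max h h'"
  define c where "c = dens_const \<gamma>"
  define C3 where "C3 = (2 * \<gamma>) ^ q + 2 * c ^ q / (p + 1)"
  define Far where "Far = (\<Sum>i\<in>{0..I}. \<Sum>i'\<in>{0..I'}. far_weight p h h' m i i')
    + (\<Sum>i\<in>{0..I}. \<Sum>i'\<in>{0..I'}. far_weight p h' h m i' i)"
  define Near where "Near = (\<Sum>i\<in>{0..I}. \<Sum>i'\<in>{0..I'}. near_weight h h' m i i')"
  have pneg: "p < 0" using q \<gamma> unfolding p_def by (simp add: mult_pos_neg)
  have c: "c > 0" using \<gamma> dens_const_pos unfolding c_def by blast
  have C3: "C3 \<ge> 0" unfolding C3_def using c p \<gamma> unfolding p_def by (intro add_nonneg_nonneg divide_nonneg_pos) auto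
  have mp: "m > 0" using h unfolding m_def by auto
  have m_pow: "m * m powr p = m powr (p + 1)" using mp by (simp add: powr_add)
  have Far: "Far \<le> 2 * (m powr p * (1 + 1 / (- p)))"
  proof -
    have "(\<Sum>i\<in>{0..I}. \<Sum>i'\<in>{0..I'}. far_weight p h' h m i' i) = (\<Sum>i'\<in>{0..I'}. \<Sum>i\<in>{0..I}. far_weight p h' h m i' i)"
      by (rule sum.swap)
    then show ?thesis
      using far_weight_sum[of h h' m p I I'] far_weight_sum[of h' h m p I' I] h I I' pneg
      unfolding Far_def m_def by simp
  qed
  have Near: "Near \<le> 5 * m"
    unfolding Near_def m_def using h I by (intro near_weight_sum) auto
  have "\<bar>\<Sum>i\<in>{0..I}. \<Sum>i'\<in>{0..I'}. cell_error q \<gamma> (real i * h) (real (Suc i) * h) (real i' * h') (real (Suc i') * h')\<bar>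
      \<le> 2 * m * (- p) * c ^ q * Far + C3 * m powr p * Near"
  proof -
    have "\<bar>\<Sum>i\<in>{0..I}. \<Sum>i'\<in>{0..I'}. cell_error q \<gamma> (real i * h) (real (Suc i) * h) (real i' * h') (real (Suc i') * h')\<bar>
      \<le> (\<Sum>i\<in>{0..I}. \<Sum>i'\<in>{0..I'}. 2 * m * (- p) * c ^ q * far_weight p h h' m i i'
          + 2 * m * (- p) * c ^ q * far_weight p h' h m i' i + C3 * m powr p * near_weight h h' m i i')"
      unfolding p_def c_def C3_def
      by (rule order_trans[OF sum_abs], intro sum_mono order_trans[OF sum_abs])
         (rule cell_error_weights[OF q \<gamma> p h m_def])
    then show ?thesis unfolding Far_def Near_def by (simp only: sum.distrib sum_distrib_left distrib_left)
  qed
  also have "\<dots> \<le> 2 * m * (- p) * c ^ q * (2 * (m powr p * (1 + 1 / (- p)))) + C3 * m powr p * (5 * m)"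
    using Far Near mp pneg c C3 by (intro add_mono mult_left_mono mult_nonneg_nonneg) auto
  also have "\<dots> = (4 * c ^ q * (1 - p) + 5 * C3) * (m * m powr p)"
    using pneg by (simp add: field_simps)
  finally show ?thesis unfolding m_pow unfolding m_def c_def C3_def p_def .
qed

subsection \<open>The one-dimensional Gram sums converge to the Hermite covariance\<close>

text \<open>Each coordinate of \<open>q! \<langle>h\<^sub>N\<^sub>,\<^sub>M(t,s), h\<^sub>N\<^sub>'\<^sub>,\<^sub>M\<^sub>'(u,v)\<rangle>\<close> contributes the following sum over the
  cells \<open>[i/N,(i+1)/N]\<close>, \<open>i \<le> [(N-1)t]\<close>, and \<open>[i'/N',(i'+1)/N']\<close>, \<open>i' \<le> [(N'-1)u]\<close>.\<close>
definition gram_1d :: "real \<Rightarrow> nat \<Rightarrow> nat \<Rightarrow> nat \<Rightarrow> real \<Rightarrow> real \<Rightarrow> real" where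
  "gram_1d \<gamma> q N N' t u = (real N * real N') ^ (q - 1) / kappa \<gamma> q *
     (\<Sum>i\<in>{0..nat \<lfloor>(real N - 1) * t\<rfloor>}. \<Sum>i'\<in>{0..nat \<lfloor>(real N' - 1) * u\<rfloor>}.
        cell_cov \<gamma> (real i / real N) (real (i + 1) / real N) (real i' / real N') (real (i' + 1) / real N') ^ q)"

definition grid_end :: "nat \<Rightarrow> real \<Rightarrow> real" where
  "grid_end N t = real (Suc (nat \<lfloor>(real N - 1) * t\<rfloor>)) / real N"

lemma grid_end:
  fixes N :: nat and t :: real
  assumes N: "N \<ge> 1" and t: "0 \<le> t" "t \<le> 1"
  shows "0 \<le> grid_end N t" "grid_end N t \<le> 1" "\<bar>grid_end N t - t\<bar> \<le> 1 / real N"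
proof -
  define I where "I = nat \<lfloor>(real N - 1) * t\<rfloor>"
  have "real I = real_of_int \<lfloor>(real N - 1) * t\<rfloor>" unfolding I_def using N t by simp
  then have lo: "(real N - 1) * t - 1 < real I" and hi: "real I \<le> (real N - 1) * t"
    by linarith+
  have "(real N - 1) * t \<le> real N - 1" using N t mult_left_le[of t "real N - 1"] by simp
  then have "real I + 1 \<le> real N" using hi by linarith
  then show "grid_end N t \<le> 1" unfolding grid_end_def I_def[symmetric] using N by (simp add: field_simps)
  show "0 \<le> grid_end N t" unfolding grid_end_def by simp
  have "grid_end N t - t = (real I + 1 - real N * t) / real N"
    unfolding grid_end_def I_def[symmetric] using N by (simp add: field_simps)
  moreover have "\<bar>real I + 1 - real N * t\<bar> \<le> 1" using lo hi t by (auto simp: algebra_simps)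
  ultimately show "\<bar>grid_end N t - t\<bar> \<le> 1 / real N"
    using N by (simp add: abs_divide divide_right_mono)
qed

lemma kappa_pos:
  fixes q :: nat and \<gamma> :: real
  assumes \<gamma>: "1/2 < \<gamma>" and p: "-1 < q * (2 * \<gamma> - 2)"
  shows "kappa \<gamma> q > 0"
proof -
  have "\<gamma> * q - q + 1 > 0" "2 * \<gamma> * q - 2 * q + 1 > 0" using p by (simp_all add: algebra_simps)
  then show ?thesis unfolding kappa_def using \<gamma> by (intro divide_pos_pos mult_pos_pos) auto
qed

text \<open>The telescoped model, normalised by \<open>\<kappa>\<^sub>\<gamma>\<close>, is exactly the covariance \<open>R\<^sub>H\<close> with
  \<open>H = q(\<gamma>-1) + 1\<close>; this is where the constant \<open>\<kappa>\<^sub>\<gamma>\<close> comes from.\<close>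
lemma cell_model_kappa:
  fixes q :: nat and \<gamma> X Y :: real
  assumes \<gamma>: "1/2 < \<gamma>" and p: "-1 < q * (2 * \<gamma> - 2)" and XY: "X \<ge> 0" "Y \<ge> 0"
  shows "dens_const \<gamma> ^ q * cell_model (q * (2 * \<gamma> - 2)) 0 X 0 Y / kappa \<gamma> q = R (q * (\<gamma> - 1) + 1) X Y"
proof -
  define A where "A = \<gamma> * q - q + 1"
  define B where "B = 2 * \<gamma> * q - 2 * q + 1"
  have A: "A > 0" and B: "B > 0" using p unfolding A_def B_def by (simp_all add: algebra_simps)
  have c: "dens_const \<gamma> > 0" using \<gamma> by (rule dens_const_pos)
  have kappa: "kappa \<gamma> q = dens_const \<gamma> ^ q / (A * B)"
    unfolding kappa_def dens_const_def A_def B_def by (simp add: power_mult_distrib)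
  have denom: "(q * (2 * \<gamma> - 2) + 1) * (q * (2 * \<gamma> - 2) + 2) = B * (2 * A)"
    unfolding A_def B_def by (simp add: algebra_simps)
  have hurst: "q * (2 * \<gamma> - 2) / 2 + 1 = q * (\<gamma> - 1) + 1"
    by (simp add: field_simps)
  show ?thesis
    unfolding cell_model_origin[OF XY] kappa denom hurst using A B c by (simp add: field_simps)
qed

lemma gram_1d_decomposition:
  fixes q :: nat and \<gamma> :: real and N N' :: nat and t u :: real
  assumes \<gamma>: "1/2 < \<gamma>" and p: "-1 < q * (2 * \<gamma> - 2)"
  defines "I \<equiv> nat \<lfloor>(real N - 1) * t\<rfloor>" and "I' \<equiv> nat \<lfloor>(real N' - 1) * u\<rfloor>"
    and "h \<equiv> 1 / real N" and "h' \<equiv> 1 / real N'"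
  shows "gram_1d \<gamma> q N N' t u = R (q * (\<gamma> - 1) + 1) (grid_end N t) (grid_end N' u) +
     (\<Sum>i\<in>{0..I}. \<Sum>i'\<in>{0..I'}. cell_error q \<gamma> (real i * h) (real (Suc i) * h) (real i' * h') (real (Suc i') * h'))
       / kappa \<gamma> q"
proof -
  define p where "p = q * (2 * \<gamma> - 2)"
  define c where "c = dens_const \<gamma>"
  have cell_eq: "(real N * real N') ^ (q - 1) *
        cell_cov \<gamma> (real i / real N) (real (i + 1) / real N) (real i' / real N') (real (i' + 1) / real N') ^ q
      = cell_error q \<gamma> (real i * h) (real (Suc i) * h) (real i' * h') (real (Suc i') * h')
        + c ^ q * cell_model p (real i * h) (real (Suc i) * h) (real i' * h') (real (Suc i') * h')" for i i'
  proof -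
    have "real (Suc i) * h - real i * h = h" "real (Suc i') * h' - real i' * h' = h'"
      by (simp_all add: algebra_simps)
    moreover have "1 / (h * h') = real N * real N'" unfolding h_def h'_def by simp
    moreover have "real i / real N = real i * h" "real (i + 1) / real N = real (Suc i) * h"
      "real i' / real N' = real i' * h'" "real (i' + 1) / real N' = real (Suc i') * h'"
      unfolding h_def h'_def by simp_all
    ultimately show ?thesis unfolding cell_error_def c_def p_def by simp
  qed
  have "gram_1d \<gamma> q N N' t u = (\<Sum>i\<in>{0..I}. \<Sum>i'\<in>{0..I'}. (real N * real N') ^ (q - 1) *
        cell_cov \<gamma> (real i / real N) (real (i + 1) / real N) (real i' / real N') (real (i' + 1) / real N') ^ q)
      / kappa \<gamma> q"
    unfolding gram_1d_def I_def[symmetric] I'_def[symmetric] using kappa_pos[OF \<gamma> p]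
    by (simp add: sum_distrib_left sum_divide_distrib field_simps)
  also have "\<dots> = ((\<Sum>i\<in>{0..I}. \<Sum>i'\<in>{0..I'}. cell_error q \<gamma> (real i * h) (real (Suc i) * h) (real i' * h') (real (Suc i') * h'))
        + c ^ q * (\<Sum>i\<in>{0..I}. \<Sum>i'\<in>{0..I'}. cell_model p (real i * h) (real (Suc i) * h) (real i' * h') (real (Suc i') * h')))
      / kappa \<gamma> q"
    by (simp only: cell_eq sum.distrib sum_distrib_left)
  finally have "gram_1d \<gamma> q N N' t u = (\<dots>)" .
  moreover have "c ^ q * (\<Sum>i\<in>{0..I}. \<Sum>i'\<in>{0..I'}. cell_model p (real i * h) (real (Suc i) * h) (real i' * h') (real (Suc i') * h'))
      = kappa \<gamma> q * R (q * (\<gamma> - 1) + 1) (grid_end N t) (grid_end N' u)"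
    using cell_model_telescope[where p = p and x = "\<lambda>i. real i * h" and y = "\<lambda>i. real i * h'" and I = I and I' = I']
      cell_model_kappa[OF \<gamma> p, of "grid_end N t" "grid_end N' u"] kappa_pos[OF \<gamma> p]
    unfolding grid_end_def I_def I'_def h_def h'_def c_def p_def by (simp add: field_simps)
  ultimately show ?thesis using kappa_pos[OF \<gamma> p] by (simp add: add_divide_distrib)
qed

lemma gram_1d_error:
  fixes q :: nat and \<gamma> :: real and N N' :: nat and t u :: real
  assumes q: "q \<ge> 1" and \<gamma>: "1/2 < \<gamma>" "\<gamma> < 1" and p: "-1 < q * (2 * \<gamma> - 2)"
    and N: "N \<ge> 1" "N' \<ge> 1" and t: "0 \<le> t" "t \<le> 1" and u: "0 \<le> u" "u \<le> 1"
  shows "\<bar>gram_1d \<gamma> q N N' t u - R (q * (\<gamma> - 1) + 1) (grid_end N t) (grid_end N' u)\<bar>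
     \<le> (4 * dens_const \<gamma> ^ q * (1 - q * (2 * \<gamma> - 2))
          + 5 * ((2 * \<gamma>) ^ q + 2 * dens_const \<gamma> ^ q / (q * (2 * \<gamma> - 2) + 1))) / kappa \<gamma> q
        * max (1 / real N) (1 / real N') powr (q * (2 * \<gamma> - 2) + 1)"
proof -
  define I where "I = nat \<lfloor>(real N - 1) * t\<rfloor>"
  define I' where "I' = nat \<lfloor>(real N' - 1) * u\<rfloor>"
  have I: "real (Suc I) * (1 / real N) \<le> 1" and I': "real (Suc I') * (1 / real N') \<le> 1"
    using grid_end(2)[OF N(1) t] grid_end(2)[OF N(2) u] unfolding grid_end_def I_def I'_def by simp_all
  show ?thesis
    unfolding gram_1d_decomposition[OF \<gamma>(1) p] I_def[symmetric] I'_def[symmetric]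
    using grid_error[OF q \<gamma> p _ _ I I'] N kappa_pos[OF \<gamma>(1) p]
    by (simp add: abs_divide divide_right_mono)
qed

lemma gram_1d_tendsto:
  fixes q :: nat and \<gamma> t u :: real
  assumes q: "q \<ge> 1" and \<gamma>: "1/2 < \<gamma>" "\<gamma> < 1" and p: "-1 < q * (2 * \<gamma> - 2)"
    and t: "0 \<le> t" "t \<le> 1" and u: "0 \<le> u" "u \<le> 1"
  shows "((\<lambda>(N, N'). gram_1d \<gamma> q N N' t u) \<longlongrightarrow> R (q * (\<gamma> - 1) + 1) t u) (sequentially \<times>\<^sub>F sequentially)"
proof -
  define H where "H = real q * (\<gamma> - 1) + 1"
  define K where "K = (4 * dens_const \<gamma> ^ q * (1 - q * (2 * \<gamma> - 2))
          + 5 * ((2 * \<gamma>) ^ q + 2 * dens_const \<gamma> ^ q / (q * (2 * \<gamma> - 2) + 1))) / kappa \<gamma> q"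
  define mesh where "mesh = (\<lambda>(N, N'). max (1 / real N) (1 / real N') :: real)"
  define bound where "bound = (\<lambda>NN. K * mesh NN powr (q * (2 * \<gamma> - 2) + 1)
      + 2 * H * (1 / real (fst NN) + 1 / real (snd NN)))"
  have H: "1 \<le> 2 * H" using p unfolding H_def by (simp add: algebra_simps)
  have inv_fst: "((\<lambda>NN. 1 / real (fst NN)) \<longlongrightarrow> 0) (sequentially \<times>\<^sub>F sequentially)"
    by (rule filterlim_compose[OF lim_1_over_n filterlim_fst])
  have inv_snd: "((\<lambda>NN. 1 / real (snd NN)) \<longlongrightarrow> 0) (sequentially \<times>\<^sub>F sequentially)"
    by (rule filterlim_compose[OF lim_1_over_n filterlim_snd])
  have "(mesh \<longlongrightarrow> max 0 0) (sequentially \<times>\<^sub>F sequentially)"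
    unfolding mesh_def case_prod_beta by (intro tendsto_max inv_fst inv_snd)
  then have "((\<lambda>NN. mesh NN powr (q * (2 * \<gamma> - 2) + 1)) \<longlongrightarrow> 0) (sequentially \<times>\<^sub>F sequentially)"
    using p by (intro tendsto_zero_powrI always_eventually) (auto simp: mesh_def le_max_iff_disj split: prod.splits)
  then have bound_lim: "(bound \<longlongrightarrow> 0) (sequentially \<times>\<^sub>F sequentially)"
    unfolding bound_def using tendsto_mult_right_zero tendsto_add_zero inv_fst inv_snd
    by (auto intro!: tendsto_add_zero tendsto_mult_right_zero)
  have "\<forall>\<^sub>F NN in sequentially \<times>\<^sub>F sequentially. fst NN \<ge> 1 \<and> snd NN \<ge> 1"
    unfolding eventually_prod_sequentially by (intro exI[of _ 1]) auto
  then have "\<forall>\<^sub>F NN in sequentially \<times>\<^sub>F sequentially.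
      norm ((\<lambda>(N, N'). gram_1d \<gamma> q N N' t u) NN - R H t u) \<le> bound NN"
  proof eventually_elim
    case (elim NN)
    obtain N N' where NN: "NN = (N, N')" "N \<ge> 1" "N' \<ge> 1" using elim by (cases NN) auto
    have "\<bar>gram_1d \<gamma> q N N' t u - R H (grid_end N t) (grid_end N' u)\<bar> \<le> K * mesh NN powr (q * (2 * \<gamma> - 2) + 1)"
      using gram_1d_error[OF q \<gamma> p NN(2,3) t u] unfolding NN(1) mesh_def K_def H_def by simp
    moreover have "\<bar>R H (grid_end N t) (grid_end N' u) - R H t u\<bar> \<le> 2 * H * (1 / real N + 1 / real N')"
      using grid_end[OF NN(2) t] grid_end[OF NN(3) u] t u H
      by (intro order_trans[OF R_lipschitz] mult_left_mono add_mono) auto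
    ultimately show ?case unfolding NN(1) bound_def by simp
  qed
  then have "((\<lambda>NN. (\<lambda>(N, N'). gram_1d \<gamma> q N N' t u) NN - R H t u) \<longlongrightarrow> 0) (sequentially \<times>\<^sub>F sequentially)"
    by (rule Lim_null_comparison[OF _ bound_lim])
  then show ?thesis unfolding H_def by (simp add: LIM_zero_iff)
qed

subsection \<open>The kernels \<open>h\<^sub>N\<^sub>,\<^sub>M\<close> and their Gram matrix\<close>

lemma ipH_cell_cov:
  "ipH \<alpha> \<beta> (a, b, c, d) (a', b', c', d') = cell_cov \<alpha> a b a' b' * cell_cov \<beta> c d c' d'"
  unfolding ipH_def cell_cov_def by simp

lemma grid_cell_valid:
  fixes N M i j :: nat and t s :: real
  assumes N: "N \<ge> 1" "M \<ge> 1" and t: "0 \<le> t" "t \<le> 1" and s: "0 \<le> s" "s \<le> 1"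
    and i: "i \<le> nat \<lfloor>(real N - 1) * t\<rfloor>" and j: "j \<le> nat \<lfloor>(real M - 1) * s\<rfloor>"
  shows "valid_rect (real i / real N, real (i + 1) / real N, real j / real M, real (j + 1) / real M)"
proof -
  have "real (i + 1) / real N \<le> grid_end N t" "real (j + 1) / real M \<le> grid_end M s"
    using i j unfolding grid_end_def by (simp_all add: divide_right_mono)
  then have "real (i + 1) / real N \<le> 1" "real (j + 1) / real M \<le> 1"
    using grid_end(2)[OF N(1) t] grid_end(2)[OF N(2) s] by linarith+
  then show ?thesis unfolding valid_rect_def using N by (simp add: divide_right_mono)
qed

lemma kernel_inner:
  fixes q :: nat and \<alpha> \<beta> :: real and E :: "rect list \<Rightarrow> 'a::real_inner"
  assumes tensor_inner: "\<And>xs ys. length xs = q \<Longrightarrow> length ys = q \<Longrightarrow>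
          list_all valid_rect xs \<Longrightarrow> list_all valid_rect ys \<Longrightarrow>
          inner (E xs) (E ys) = (\<Prod>k<q. ipH \<alpha> \<beta> (xs ! k) (ys ! k))"
    and \<kappa>: "kappa \<alpha> q > 0" "kappa \<beta> q > 0"
    and N: "N \<ge> 1" "M \<ge> 1" "N' \<ge> 1" "M' \<ge> 1"
    and t: "0 \<le> t" "t \<le> 1" and s: "0 \<le> s" "s \<le> 1" and u: "0 \<le> u" "u \<le> 1" and v: "0 \<le> v" "v \<le> 1"
  shows "inner (hNM E q \<alpha> \<beta> N M t s) (hNM E q \<alpha> \<beta> N' M' u v)
       = gram_1d \<alpha> q N N' t u * gram_1d \<beta> q M M' s v / fact q"
proof -
  define I where "I = nat \<lfloor>(real N - 1) * t\<rfloor>"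
  define J where "J = nat \<lfloor>(real M - 1) * s\<rfloor>"
  define I' where "I' = nat \<lfloor>(real N' - 1) * u\<rfloor>"
  define J' where "J' = nat \<lfloor>(real M' - 1) * v\<rfloor>"
  define rc where "rc n m i j = (real i / real n, real (i + 1) / real n, real j / real m, real (j + 1) / real m)"
    for n m i j :: nat
  define fa where "fa i i' = cell_cov \<alpha> (real i / real N) (real (i + 1) / real N) (real i' / real N') (real (i' + 1) / real N') ^ q" for i i'
  define fb where "fb j j' = cell_cov \<beta> (real j / real M) (real (j + 1) / real M) (real j' / real M') (real (j' + 1) / real M') ^ q" for j j'
  define Sum where "Sum n m I J = (\<Sum>i\<in>{0..I}. \<Sum>j\<in>{0..J}. E (replicate q (rc n m i j)))" for n m I J
  have cells: "inner (E (replicate q (rc N M i j))) (E (replicate q (rc N' M' i' j'))) = fa i i' * fb j j'"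
    if "i \<le> I" "j \<le> J" "i' \<le> I'" "j' \<le> J'" for i j i' j'
  proof -
    have "valid_rect (rc N M i j)" "valid_rect (rc N' M' i' j')"
      unfolding rc_def using that
      by (intro grid_cell_valid[OF N(1,2) t s] grid_cell_valid[OF N(3,4) u v]; simp add: I_def J_def I'_def J'_def)+
    then have "inner (E (replicate q (rc N M i j))) (E (replicate q (rc N' M' i' j')))
        = ipH \<alpha> \<beta> (rc N M i j) (rc N' M' i' j') ^ q"
      by (subst tensor_inner) (auto simp: list_all_iff)
    then show ?thesis unfolding rc_def ipH_cell_cov fa_def fb_def by (simp add: power_mult_distrib)
  qed
  have "inner (Sum N M I J) (Sum N' M' I' J') = (\<Sum>i\<in>{0..I}. \<Sum>j\<in>{0..J}. \<Sum>i'\<in>{0..I'}. \<Sum>j'\<in>{0..J'}.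
      inner (E (replicate q (rc N M i j))) (E (replicate q (rc N' M' i' j'))))"
    unfolding Sum_def by (simp only: inner_sum_left) (simp only: inner_sum_right)
  also have "\<dots> = (\<Sum>i\<in>{0..I}. \<Sum>j\<in>{0..J}. \<Sum>i'\<in>{0..I'}. \<Sum>j'\<in>{0..J'}. fa i i' * fb j j')"
    by (intro sum.cong[OF refl]) (simp add: cells)
  also have "\<dots> = (\<Sum>i\<in>{0..I}. \<Sum>i'\<in>{0..I'}. fa i i') * (\<Sum>j\<in>{0..J}. \<Sum>j'\<in>{0..J'}. fb j j')"
    by (simp only: sum_product)
  finally have inner_sums: "inner (Sum N M I J) (Sum N' M' I' J')
      = (\<Sum>i\<in>{0..I}. \<Sum>i'\<in>{0..I'}. fa i i') * (\<Sum>j\<in>{0..J}. \<Sum>j'\<in>{0..J'}. fb j j')" .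
  define F where "F = fact q / (kappa \<alpha> q * kappa \<beta> q)"
  have phi_sq: "phi q \<alpha> \<beta> N M * phi q \<alpha> \<beta> N' M' = F * (real N * real N') ^ (q - 1) * (real M * real M') ^ (q - 1)"
  proof -
    have "sqrt F * sqrt F = F" using \<kappa> unfolding F_def by simp
    then show ?thesis unfolding phi_def F_def[symmetric] by (simp add: power_mult_distrib algebra_simps)
  qed
  have "inner (hNM E q \<alpha> \<beta> N M t s) (hNM E q \<alpha> \<beta> N' M' u v)
      = (phi q \<alpha> \<beta> N M * phi q \<alpha> \<beta> N' M') / (fact q * fact q) * inner (Sum N M I J) (Sum N' M' I' J')"
    unfolding hNM_def Sum_def rc_def I_def J_def I'_def J'_def by (simp add: field_simps)
  also have "\<dots> = gram_1d \<alpha> q N N' t u * gram_1d \<beta> q M M' s v / fact q"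
    unfolding phi_sq inner_sums gram_1d_def I_def[symmetric] J_def[symmetric] I'_def[symmetric] J'_def[symmetric]
      fa_def[symmetric] fb_def[symmetric] F_def using \<kappa> by (simp add: field_simps)
  finally show ?thesis .
qed

lemma kernel_gram_tendsto:
  fixes q :: nat and \<alpha> \<beta> t s u v :: real and E :: "rect list \<Rightarrow> 'a::real_inner"
  assumes tensor_inner: "\<And>xs ys. length xs = q \<Longrightarrow> length ys = q \<Longrightarrow>
          list_all valid_rect xs \<Longrightarrow> list_all valid_rect ys \<Longrightarrow>
          inner (E xs) (E ys) = (\<Prod>k<q. ipH \<alpha> \<beta> (xs ! k) (ys ! k))"
    and q: "q \<ge> 1"
    and \<alpha>: "1/2 < \<alpha>" "\<alpha> < 1" "-1 < q * (2 * \<alpha> - 2)"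
    and \<beta>: "1/2 < \<beta>" "\<beta> < 1" "-1 < q * (2 * \<beta> - 2)"
    and t: "0 \<le> t" "t \<le> 1" and s: "0 \<le> s" "s \<le> 1" and u: "0 \<le> u" "u \<le> 1" and v: "0 \<le> v" "v \<le> 1"
  shows "((\<lambda>(NM, NM'). inner (hNM E q \<alpha> \<beta> (fst NM) (snd NM) t s) (hNM E q \<alpha> \<beta> (fst NM') (snd NM') u v))
           \<longlongrightarrow> R (q * (\<alpha> - 1) + 1) t u * R (q * (\<beta> - 1) + 1) s v / fact q)
         ((sequentially \<times>\<^sub>F sequentially) \<times>\<^sub>F (sequentially \<times>\<^sub>F sequentially))"
    (is "(?inner \<longlongrightarrow> _) ?F")
proof -
  have fst_fst: "filterlim (\<lambda>x. fst (fst x)) sequentially ?F"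
    and snd_fst: "filterlim (\<lambda>x. snd (fst x)) sequentially ?F"
    and fst_snd: "filterlim (\<lambda>x. fst (snd x)) sequentially ?F"
    and snd_snd: "filterlim (\<lambda>x. snd (snd x)) sequentially ?F"
    by (rule filterlim_compose[OF filterlim_fst filterlim_fst] filterlim_compose[OF filterlim_snd filterlim_fst]
        filterlim_compose[OF filterlim_fst filterlim_snd] filterlim_compose[OF filterlim_snd filterlim_snd])+
  have "((\<lambda>x. gram_1d \<alpha> q (fst (fst x)) (fst (snd x)) t u) \<longlongrightarrow> R (q * (\<alpha> - 1) + 1) t u) ?F"
    using filterlim_compose[OF gram_1d_tendsto[OF q \<alpha> t u] filterlim_Pair[OF fst_fst fst_snd]] by simp
  moreover have "((\<lambda>x. gram_1d \<beta> q (snd (fst x)) (snd (snd x)) s v) \<longlongrightarrow> R (q * (\<beta> - 1) + 1) s v) ?F"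
    using filterlim_compose[OF gram_1d_tendsto[OF q \<beta> s v] filterlim_Pair[OF snd_fst snd_snd]] by simp
  ultimately have lim: "((\<lambda>x. gram_1d \<alpha> q (fst (fst x)) (fst (snd x)) t u * gram_1d \<beta> q (snd (fst x)) (snd (snd x)) s v / fact q)
      \<longlongrightarrow> R (q * (\<alpha> - 1) + 1) t u * R (q * (\<beta> - 1) + 1) s v / fact q) ?F"
    by (intro tendsto_divide tendsto_mult) auto
  have "eventually (\<lambda>x. fst (fst x) \<ge> 1 \<and> snd (fst x) \<ge> 1 \<and> fst (snd x) \<ge> 1 \<and> snd (snd x) \<ge> 1) ?F"
    using fst_fst snd_fst fst_snd snd_snd
    by (intro eventually_conj) (auto simp: filterlim_at_top eventually_ge_at_top)
  then have "eventually (\<lambda>x. gram_1d \<alpha> q (fst (fst x)) (fst (snd x)) t u * gram_1d \<beta> q (snd (fst x)) (snd (snd x)) s v / fact q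
      = ?inner x) ?F"
    by eventually_elim
       (auto simp: case_prod_beta kernel_inner[OF tensor_inner kappa_pos[OF \<alpha>(1,3)] kappa_pos[OF \<beta>(1,3)] _ _ _ _ t s u v])
  with lim show ?thesis by (rule Lim_transform_eventually)
qed

lemma hurst_exponent_range:
  fixes q :: nat and \<gamma> :: real
  assumes q: "q \<ge> 2" and \<gamma>: "1 - 1 / (2 * q) < \<gamma>"
  shows "1/2 < \<gamma>" "-1 < q * (2 * \<gamma> - 2)"
proof -
  have "1 / (2 * real q) \<le> 1 / 4" using q by (simp add: field_simps)
  then show "1/2 < \<gamma>" using \<gamma> by linarith
  show "-1 < q * (2 * \<gamma> - 2)" using q \<gamma> by (simp add: field_simps)
qed

theorem mainTheorem4:
  fixes q :: nat and \<alpha> \<beta> :: real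
    and E :: "rect list \<Rightarrow> 'a::{real_inner, complete_space}"
    and P :: "'b measure" and I :: "'a \<Rightarrow> 'b \<Rightarrow> real"
  assumes q: "q \<ge> 2"
    and \<alpha>: "1 - 1 / (2 * q) < \<alpha>" "\<alpha> < 1"
    and \<beta>: "1 - 1 / (2 * q) < \<beta>" "\<beta> < 1"
    and tensor_inner: "\<And>xs ys. length xs = q \<Longrightarrow> length ys = q \<Longrightarrow>
          list_all valid_rect xs \<Longrightarrow> list_all valid_rect ys \<Longrightarrow>
          inner (E xs) (E ys) = (\<Prod>k<q. ipH \<alpha> \<beta> (xs ! k) (ys ! k))"
    and tensor_dense: "closure (span (E ` {xs. length xs = q \<and> list_all valid_rect xs})) = UNIV"
    and P: "prob_space P"
    and I_meas: "\<And>f. I f \<in> borel_measurable P"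
    and I_isometry: "\<And>f g. integral\<^sup>L P (\<lambda>\<omega>. I f \<omega> * I g \<omega>) = fact q * inner f g"
  shows "\<exists>\<mu>. (\<forall>t\<in>{0..1}. \<forall>s\<in>{0..1}.
              ((\<lambda>(N, M). hNM E q \<alpha> \<beta> N M t s) \<longlongrightarrow> \<mu> t s) (sequentially \<times>\<^sub>F sequentially))
          \<and> (\<forall>t\<in>{0..1}. \<forall>s\<in>{0..1}. \<forall>u\<in>{0..1}. \<forall>v\<in>{0..1}.
              integral\<^sup>L P (\<lambda>\<omega>. I (\<mu> t s) \<omega> * I (\<mu> u v) \<omega>)
                = R (q * (\<alpha> - 1) + 1) t u * R (q * (\<beta> - 1) + 1) s v)"
proof -
  have \<alpha>': "1/2 < \<alpha>" "-1 < q * (2 * \<alpha> - 2)" and \<beta>': "1/2 < \<beta>" "-1 < q * (2 * \<beta> - 2)"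
    using hurst_exponent_range[OF q \<alpha>(1)] hurst_exponent_range[OF q \<beta>(1)] by auto
  define kernel where "kernel t s = (\<lambda>NM. hNM E q \<alpha> \<beta> (fst NM) (snd NM) t s)" for t s
  define limit where "limit t s u v = R (q * (\<alpha> - 1) + 1) t u * R (q * (\<beta> - 1) + 1) s v / fact q" for t s u v
  have gram_kernel: "((\<lambda>(i, j). inner (kernel t s i) (kernel u v j)) \<longlongrightarrow> limit t s u v)
      ((sequentially \<times>\<^sub>F sequentially) \<times>\<^sub>F (sequentially \<times>\<^sub>F sequentially))"
    if "t \<in> {0..1}" "s \<in> {0..1}" "u \<in> {0..1}" "v \<in> {0..1}" for t s u v
    unfolding kernel_def limit_def using that q
    by (intro kernel_gram_tendsto[OF tensor_inner _ \<alpha>'(1) \<alpha>(2) \<alpha>'(2) \<beta>'(1) \<beta>(2) \<beta>'(2)]) auto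
  have nontrivial: "(sequentially \<times>\<^sub>F sequentially :: (nat \<times> nat) filter) \<noteq> bot"
    by (simp add: prod_filter_eq_bot)
  define \<mu> where "\<mu> t s = Lim (sequentially \<times>\<^sub>F sequentially) (kernel t s)" for t s
  have \<mu>: "(kernel t s \<longlongrightarrow> \<mu> t s) (sequentially \<times>\<^sub>F sequentially)"
    if "t \<in> {0..1}" "s \<in> {0..1}" for t s
    using tendsto_of_gram_tendsto[OF nontrivial gram_kernel[OF that that]] tendsto_Lim[OF nontrivial]
    unfolding \<mu>_def by blast
  have "fact q * inner (\<mu> t s) (\<mu> u v) = R (q * (\<alpha> - 1) + 1) t u * R (q * (\<beta> - 1) + 1) s v"
    if "t \<in> {0..1}" "s \<in> {0..1}" "u \<in> {0..1}" "v \<in> {0..1}" for t s u v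
    using inner_of_limits[OF nontrivial nontrivial \<mu>[OF that(1,2)] \<mu>[OF that(3,4)] gram_kernel[OF that]]
    unfolding limit_def by simp
  moreover have "((\<lambda>(N, M). hNM E q \<alpha> \<beta> N M t s) \<longlongrightarrow> \<mu> t s) (sequentially \<times>\<^sub>F sequentially)"
    if "t \<in> {0..1}" "s \<in> {0..1}" for t s
    using \<mu>[OF that] unfolding kernel_def by (simp add: case_prod_beta')
  ultimately show ?thesis unfolding I_isometry by blast
qed

end
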